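(* Let $X$ and $Y$ be Banach spaces and let $T\in B(X)$ and $S\in B(Y)$ be non-zero compact operators. If $T$ and $S$ are equivalent after extension, then $I_T=I_S$, i.e. $I_T(Z_1,Z_2)=I_S(Z_1,Z_2)$ for all Banach spaces $Z_1,Z_2$.
   Context: All Banach spaces are complex; $B(X,Y)$ denotes the bounded linear operators from $X$ to $Y$, $B(X)=B(X,X)$; invertibility means having a bounded inverse. $X\oplus Y$ denotes the $\ell^2$-direct sum and $\mathrm{id}_X$ the identity on $X$. Operators $T\in B(X)$ and $S\in B(Y)$ are called equivalent after extension if there exist Banach spaces $X'$, $Y'$ and invertible operators $E\in B(Y\oplus Y',X\oplus X')$ and $F\in B(X\oplus X',Y\oplus Y')$ with $\begin{bmatrix}T&0\\0&\mathrm{id}_{X'}\end{bmatrix}=E\begin{bmatrix}S&0\\0&\mathrm{id}_{Y'}\end{bmatrix}F$. For an operator $T\in B(X,Y)$ and Banach spaces $Z_1,Z_2$, define $I_T(Z_1,Z_2)=\bigcup_{n\in\mathbb N}\{\sum_{j=1}^n R_jTR_j' : R_j\in B(Y,Z_2),\ R_j'\in B(Z_1,X)\}$; the operator ideal generated by $T$ is the class $I_T=\bigcup_{Z_1,Z_2}I_T(Z_1,Z_2)$. *)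

theory Defs
  imports "HOL-Analysis.Analysis"
begin

class complex_banach = banach +
  fixes cscale :: "complex \<Rightarrow> 'a \<Rightarrow> 'a"
  assumes cscale_of_real: "cscale (complex_of_real r) x = scaleR r x"
    and cscale_add_right: "cscale a (x + y) = cscale a x + cscale a y"
    and cscale_add_left: "cscale (a + b) x = cscale a x + cscale b x"
    and cscale_assoc: "cscale a (cscale b x) = cscale (a * b) x"
    and norm_cscale: "norm (cscale a x) = cmod a * norm x"

text \<open>The l2 direct sum: Isabelle's product norm is already
sqrt (norm x ^ 2 + norm y ^ 2).\<close>

instantiation prod :: (complex_banach, complex_banach) complex_banach
begin
definition cscale_prod :: "complex \<Rightarrow> 'a \<times> 'b \<Rightarrow> 'a \<times> 'b" where
  "cscale_prod c p = (cscale c (fst p), cscale c (snd p))"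
instance
proof
  fix r :: real and x :: "'a \<times> 'b"
  show "cscale (complex_of_real r) x = scaleR r x"
    by (simp add: cscale_prod_def cscale_of_real scaleR_prod_def)
next
  fix a :: complex and x y :: "'a \<times> 'b"
  show "cscale a (x + y) = cscale a x + cscale a y"
    by (simp add: cscale_prod_def cscale_add_right)
next
  fix a b :: complex and x :: "'a \<times> 'b"
  show "cscale (a + b) x = cscale a x + cscale b x"
    by (simp add: cscale_prod_def cscale_add_left)
next
  fix a b :: complex and x :: "'a \<times> 'b"
  show "cscale a (cscale b x) = cscale (a * b) x"
    by (simp add: cscale_prod_def cscale_assoc)
next
  fix a :: complex and x :: "'a \<times> 'b"
  have "norm (cscale a x) = sqrt ((cmod a)\<^sup>2 * ((norm (fst x))\<^sup>2 + (norm (snd x))\<^sup>2))"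
    by (simp add: cscale_prod_def norm_prod_def norm_cscale power_mult_distrib algebra_simps)
  also have "\<dots> = cmod a * norm x"
    by (simp add: real_sqrt_mult norm_prod_def)
  finally show "norm (cscale a x) = cmod a * norm x" .
qed
end

definition bop :: "('a::complex_banach \<Rightarrow> 'b::complex_banach) \<Rightarrow> bool" where
  "bop f \<longleftrightarrow> bounded_linear f \<and> (\<forall>c x. f (cscale c x) = cscale c (f x))"

definition invertible_op :: "('a::complex_banach \<Rightarrow> 'b::complex_banach) \<Rightarrow> bool" where
  "invertible_op f \<longleftrightarrow> bop f \<and> (\<exists>g. bop g \<and> g \<circ> f = id \<and> f \<circ> g = id)"

definition compact_op :: "('a::complex_banach \<Rightarrow> 'b::complex_banach) \<Rightarrow> bool" where
  "compact_op f \<longleftrightarrow> bop f \<and> compact (closure (f ` cball 0 1))"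

text \<open>Witnesses of equivalence after extension, for given extension spaces
(the types 'x2 and 'y2 of the second components).\<close>
definition equiv_after_ext_via ::
  "('x::complex_banach \<Rightarrow> 'x) \<Rightarrow> ('y::complex_banach \<Rightarrow> 'y)
   \<Rightarrow> ('y \<times> 'y2::complex_banach \<Rightarrow> 'x \<times> 'x2::complex_banach)
   \<Rightarrow> ('x \<times> 'x2 \<Rightarrow> 'y \<times> 'y2) \<Rightarrow> bool" where
  "equiv_after_ext_via T S E F \<longleftrightarrow>
     invertible_op E \<and> invertible_op F \<and>
     (\<lambda>(x, x'). (T x, x')) = E \<circ> (\<lambda>(y, y'). (S y, y')) \<circ> F"

text \<open>I_T(Z1,Z2): the component of the operator ideal generated by T.\<close>
definition op_ideal ::
  "('x::complex_banach \<Rightarrow> 'y::complex_banach)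
   \<Rightarrow> ('z1::complex_banach \<Rightarrow> 'z2::complex_banach) set" where
  "op_ideal T = {(\<lambda>z. \<Sum>j<n. R j (T (R' j z))) | n (R :: nat \<Rightarrow> 'y \<Rightarrow> 'z2) (R' :: nat \<Rightarrow> 'z1 \<Rightarrow> 'x).
                    \<forall>j<n. bop (R j) \<and> bop (R' j)}"

end

theory Submission
  imports Defs
begin

text \<open>From T \<oplus> 1 = E (S \<oplus> 1) F one reads off an identity T = A + T K T with A in the
ideal generated by S and K bounded. Since K T is compact, Riesz theory yields a bounded B and a
finite-rank Q with (1 - K T) B = 1 - Q, whence T = A B + T Q. A finite-rank operator lies in the
ideal generated by any non-zero operator (this is where Hahn-Banach enters), so T belongs to the
ideal generated by S; by symmetry S belongs to the ideal generated by T, and the two ideals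
coincide.\<close>

lemma cscale_zero_right [simp]: "cscale c (0::'a::complex_banach) = 0"
  using cscale_add_right[of c "0::'a" 0] by simp

lemma cscale_minus_right: "cscale c (- x) = - cscale c (x::'a::complex_banach)"
  using cscale_add_right[of c x "-x"] by (simp add: eq_neg_iff_add_eq_0 add.commute)

lemma cscale_diff_right: "cscale c (x - y) = cscale c x - cscale c (y::'a::complex_banach)"
  using cscale_add_right[of c x "-y"] by (simp add: cscale_minus_right)

lemma cscale_sum_right: "cscale c (\<Sum>i\<in>I. f i) = (\<Sum>i\<in>I. cscale c (f i::'a::complex_banach))"
  by (induction I rule: infinite_finite_induct) (auto simp: cscale_add_right)

lemma cscale_of_real_mult: "cscale (complex_of_real r * a) x = r *\<^sub>R cscale a (x::'a::complex_banach)"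
  by (metis cscale_assoc cscale_of_real)

lemma cscale_left_commute: "cscale a (cscale b (x::'a::complex_banach)) = cscale b (cscale a x)"
  by (simp only: cscale_assoc mult.commute)

lemma cscale_scaleR: "cscale a (r *\<^sub>R (x::'a::complex_banach)) = r *\<^sub>R cscale a x"
  by (metis cscale_left_commute cscale_of_real)

lemma cscale_Re_Im: "cscale c (y::'a::complex_banach) = Re c *\<^sub>R y + Im c *\<^sub>R cscale \<i> y"
proof -
  have "c = complex_of_real (Re c) + complex_of_real (Im c) * \<i>" by (simp add: complex_eq_iff)
  then show ?thesis
    by (metis cscale_add_left cscale_of_real_mult cscale_of_real)
qed

lemma cscale_ii_ii: "cscale \<i> (cscale \<i> y) = - (y::'a::complex_banach)"
  by (metis cscale_assoc cscale_of_real complex_i_mult_minus mult_1_right of_real_1 of_real_minus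
      scaleR_minus1_left)

lemma bopI: "bounded_linear f \<Longrightarrow> (\<And>c x. f (cscale c x) = cscale c (f x)) \<Longrightarrow> bop f"
  by (simp add: bop_def)

lemma bop_bounded_linear: "bop f \<Longrightarrow> bounded_linear f"
  by (simp add: bop_def)

lemma bop_cscale: "bop f \<Longrightarrow> f (cscale c x) = cscale c (f x)"
  by (simp add: bop_def)

lemma bop_compose: "bop f \<Longrightarrow> bop g \<Longrightarrow> bop (\<lambda>x. f (g x))"
  by (auto simp: bop_def intro: bounded_linear_compose)

lemma bop_diff: "bop f \<Longrightarrow> bop g \<Longrightarrow> bop (\<lambda>x. f x - g x)"
  by (auto simp: bop_def cscale_diff_right intro: bounded_linear_sub)

lemma bop_ident: "bop (\<lambda>x. x)"
  by (simp add: bop_def)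

lemma bop_fst: "bop fst"
  by (simp add: bop_def bounded_linear_fst cscale_prod_def)

lemma bop_snd: "bop snd"
  by (simp add: bop_def bounded_linear_snd cscale_prod_def)

lemma bop_Pair_left: "bop (\<lambda>x. (x, 0))"
  by (simp add: bop_def cscale_prod_def bounded_linear_Pair)

lemma bop_Pair_right: "bop (\<lambda>x. (0, x))"
  by (simp add: bop_def cscale_prod_def bounded_linear_Pair)

lemma bop_funpow:
  fixes f :: "'a::complex_banach \<Rightarrow> 'a"
  shows "bop f \<Longrightarrow> bop (f ^^ n)"
proof (induction n)
  case 0
  have "f ^^ 0 = (\<lambda>x. x)" by (rule ext) simp
  then show ?case using bop_ident by metis
next
  case (Suc n)
  then show ?case using bop_compose[of f "f ^^ n"] by simp
qed

lemma invertible_opE: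
  assumes "invertible_op f"
  obtains g where "bop f" "bop g" "\<And>x. g (f x) = x" "\<And>y. f (g y) = y"
  using assms unfolding invertible_op_def by (metis comp_apply id_apply)

section \<open>Operator ideals\<close>

lemma op_ideal_iff:
  "M \<in> op_ideal T \<longleftrightarrow>
     (\<exists>(n::nat) R R'. (\<forall>j<n. bop (R j) \<and> bop (R' j)) \<and> M = (\<lambda>z. \<Sum>j<n. R j (T (R' j z))))"
  unfolding op_ideal_def mem_Collect_eq by blast

lemma op_idealI:
  "(\<And>j. j < (n::nat) \<Longrightarrow> bop (R j) \<and> bop (R' j)) \<Longrightarrow> M = (\<lambda>z. \<Sum>j<n. R j (T (R' j z)))
    \<Longrightarrow> M \<in> op_ideal T"
  unfolding op_ideal_iff by blast

lemma op_ideal_zero: "(\<lambda>z. 0) \<in> op_ideal T"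
  by (rule op_idealI[of 0]) auto

lemma op_ideal_sandwich: "bop R \<Longrightarrow> bop R' \<Longrightarrow> (\<lambda>z. R (T (R' z))) \<in> op_ideal T"
  by (rule op_idealI[of 1 "\<lambda>_. R" "\<lambda>_. R'"]) (auto simp: lessThan_Suc)

lemma op_ideal_add:
  assumes "M1 \<in> op_ideal T" "M2 \<in> op_ideal T"
  shows "(\<lambda>z. M1 z + M2 z) \<in> op_ideal T"
proof -
  obtain n1 R1 R1' where 1: "\<forall>j<(n1::nat). bop (R1 j) \<and> bop (R1' j)"
    "M1 = (\<lambda>z. \<Sum>j<n1. R1 j (T (R1' j z)))"
    using assms(1) unfolding op_ideal_iff by blast
  obtain n2 R2 R2' where 2: "\<forall>j<(n2::nat). bop (R2 j) \<and> bop (R2' j)"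
    "M2 = (\<lambda>z. \<Sum>j<n2. R2 j (T (R2' j z)))"
    using assms(2) unfolding op_ideal_iff by blast
  define R where "R j = (if j < n1 then R1 j else R2 (j - n1))" for j
  define R' where "R' j = (if j < n1 then R1' j else R2' (j - n1))" for j
  have "(\<Sum>j<n1 + n2. R j (T (R' j z)))
      = (\<Sum>j<n1. R j (T (R' j z))) + (\<Sum>j<n2. R (n1 + j) (T (R' (n1 + j) z)))" for z
    by (induction n2) (simp_all add: add.assoc)
  then have "(\<lambda>z. M1 z + M2 z) = (\<lambda>z. \<Sum>j<n1 + n2. R j (T (R' j z)))"
    using 1 2 by (simp add: R_def R'_def)
  then show ?thesis
    by (rule op_idealI[of "n1 + n2" R R', rotated]) (use 1 2 in \<open>auto simp: R_def R'_def\<close>)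
qed

lemma op_ideal_sum: "(\<And>i. i \<in> I \<Longrightarrow> M i \<in> op_ideal T) \<Longrightarrow> (\<lambda>z. \<Sum>i\<in>I. M i z) \<in> op_ideal T"
proof (induction I rule: infinite_finite_induct)
  case (insert x F)
  then show ?case using op_ideal_add[of "M x" T "\<lambda>z. \<Sum>i\<in>F. M i z"] by simp
qed (simp_all add: op_ideal_zero)

lemma op_ideal_compose:
  assumes "M \<in> op_ideal T" "bop A" "bop B"
  shows "(\<lambda>z. A (M (B z))) \<in> op_ideal T"
proof -
  obtain n R R' where 1: "\<forall>j<(n::nat). bop (R j) \<and> bop (R' j)" "M = (\<lambda>z. \<Sum>j<n. R j (T (R' j z)))"
    using assms(1) unfolding op_ideal_iff by blast
  have "linear A" using assms(2) bop_bounded_linear bounded_linear.linear by blast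
  then show ?thesis
    using 1 assms
    by (intro op_idealI[of n "\<lambda>j x. A (R j x)" "\<lambda>j x. R' j (B x)"]) (auto simp: bop_compose linear_sum)
qed

lemma op_ideal_subset:
  assumes "T \<in> op_ideal S"
  shows "op_ideal T \<subseteq> op_ideal S"
proof
  fix M assume "M \<in> op_ideal T"
  then obtain n R R' where 1: "\<forall>j<(n::nat). bop (R j) \<and> bop (R' j)"
    "M = (\<lambda>z. \<Sum>j\<in>{..<n}. R j (T (R' j z)))"
    unfolding op_ideal_iff by blast
  have "(\<lambda>z. \<Sum>j\<in>{..<n}. R j (T (R' j z))) \<in> op_ideal S"
    by (rule op_ideal_sum, rule op_ideal_compose[OF assms]) (use 1 in auto)
  then show "M \<in> op_ideal S" using 1 by simp
qed

section \<open>Hahn-Banach extension\<close>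

text \<open>Hahn-Banach extension is carried out on
such graphs, so that Zorn's lemma applies to them directly.\<close>

definition norming_graph :: "'a::real_normed_vector \<Rightarrow> ('a \<times> real) set \<Rightarrow> bool" where
  "norming_graph v G \<longleftrightarrow>
     (\<forall>x a y b. (x, a) \<in> G \<longrightarrow> (y, b) \<in> G \<longrightarrow> (x + y, a + b) \<in> G)
     \<and> (\<forall>x a c. (x, a) \<in> G \<longrightarrow> (c *\<^sub>R x, c * a) \<in> G)
     \<and> (\<forall>a. (0, a) \<in> G \<longrightarrow> a = 0) \<and> (v, norm v) \<in> G
     \<and> (\<forall>x a. (x, a) \<in> G \<longrightarrow> a \<le> norm x)"

lemma norming_graphD:
  assumes "norming_graph v G"
  shows norming_graph_add: "\<And>x a y b. (x, a) \<in> G \<Longrightarrow> (y, b) \<in> G \<Longrightarrow> (x + y, a + b) \<in> G"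
    and norming_graph_scale: "\<And>x a c. (x, a) \<in> G \<Longrightarrow> (c *\<^sub>R x, c * a) \<in> G"
    and norming_graph_zero: "\<And>a. (0, a) \<in> G \<Longrightarrow> a = 0"
    and norming_graph_norming: "(v, norm v) \<in> G"
    and norming_graph_le_norm: "\<And>x a. (x, a) \<in> G \<Longrightarrow> a \<le> norm x"
  using assms unfolding norming_graph_def by blast+

lemma norming_graph_line:
  assumes "v \<noteq> 0"
  shows "norming_graph v {(t *\<^sub>R v, t * norm v) | t. True}"
  unfolding norming_graph_def
proof (intro conjI allI impI)
  fix x a y b
  assume "(x, a) \<in> {(t *\<^sub>R v, t * norm v) | t. True}" "(y, b) \<in> {(t *\<^sub>R v, t * norm v) | t. True}"
  then obtain s t where "x = s *\<^sub>R v" "a = s * norm v" "y = t *\<^sub>R v" "b = t * norm v" by auto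
  then show "(x + y, a + b) \<in> {(t *\<^sub>R v, t * norm v) | t. True}"
    by (intro CollectI exI[of _ "s + t"]) (simp add: scaleR_left_distrib distrib_right)
next
  fix x a c assume "(x, a) \<in> {(t *\<^sub>R v, t * norm v) | t. True}"
  then obtain s where "x = s *\<^sub>R v" "a = s * norm v" by auto
  then show "(c *\<^sub>R x, c * a) \<in> {(t *\<^sub>R v, t * norm v) | t. True}"
    by (intro CollectI exI[of _ "c * s"]) simp
next
  fix a assume "(0, a) \<in> {(t *\<^sub>R v, t * norm v) | t. True}"
  then show "a = 0" using assms by auto
next
  show "(v, norm v) \<in> {(t *\<^sub>R v, t * norm v) | t. True}"
    by (intro CollectI exI[of _ 1]) simp
next
  fix x a assume "(x, a) \<in> {(t *\<^sub>R v, t * norm v) | t. True}"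
  then show "a \<le> norm x" by (auto simp: mult_right_mono)
qed

lemma norming_graph_Union_chain:
  assumes "C \<noteq> {}" "\<forall>G\<in>C. norming_graph v G" "chain\<^sub>\<subseteq> C"
  shows "norming_graph v (\<Union>C)"
  unfolding norming_graph_def
proof (intro conjI allI impI)
  fix x a y b assume "(x, a) \<in> \<Union>C" "(y, b) \<in> \<Union>C"
  then obtain G H where GH: "G \<in> C" "H \<in> C" "(x, a) \<in> G" "(y, b) \<in> H" by auto
  then have "G \<subseteq> H \<or> H \<subseteq> G" using assms(3) unfolding chain_subset_def by blast
  then show "(x + y, a + b) \<in> \<Union>C"
    using GH assms(2) norming_graph_add by blast
next
  fix x a c assume "(x, a) \<in> \<Union>C"
  then show "(c *\<^sub>R x, c * a) \<in> \<Union>C" using assms(2) norming_graph_scale by blast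
next
  fix a assume "(0, a) \<in> \<Union>C"
  then show "a = 0" using assms(2) norming_graph_zero by blast
next
  show "(v, norm v) \<in> \<Union>C" using assms(1,2) norming_graph_norming by blast
next
  fix x a assume "(x, a) \<in> \<Union>C"
  then show "a \<le> norm x" using assms(2) norming_graph_le_norm by blast
qed

lemma norming_graph_unique:
  assumes "norming_graph v G" "(x, a) \<in> G" "(x, b) \<in> G"
  shows "a = b"
proof -
  have "(x + (-1) *\<^sub>R x, a + (-1) * b) \<in> G"
    using norming_graph_add[OF assms(1)] norming_graph_scale[OF assms(1)] assms(2,3) by blast
  then show ?thesis using norming_graph_zero[OF assms(1)] by force
qed

text \<open>The classical one-dimensional extension step: the value c at the new vector x0 must lie
between the two families of bounds, and the triangle inequality shows that they are compatible.\<close>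

lemma norming_graph_extension_value:
  assumes G: "norming_graph v G"
  obtains c where "\<And>y b. (y, b) \<in> G \<Longrightarrow> b - norm (y - x0) \<le> c"
    and "\<And>z d. (z, d) \<in> G \<Longrightarrow> c \<le> norm (z + x0) - d"
proof -
  have compatible: "b - norm (y - x0) \<le> norm (z + x0) - d" if "(y, b) \<in> G" "(z, d) \<in> G" for y b z d
  proof -
    have "b + d \<le> norm (y + z)"
      using norming_graph_le_norm[OF G norming_graph_add[OF G that]] .
    also have "\<dots> = norm ((y - x0) + (z + x0))" by simp
    also have "\<dots> \<le> norm (y - x0) + norm (z + x0)" by (rule norm_triangle_ineq)
    finally show ?thesis by simp
  qed
  define L where "L = {b - norm (y - x0) | y b. (y, b) \<in> G}"
  have zero: "(0, 0) \<in> G"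
    using norming_graph_scale[OF G norming_graph_norming[OF G], of 0] by simp
  then have nonempty: "L \<noteq> {}" unfolding L_def by blast
  have bdd: "bdd_above L"
    unfolding L_def using compatible[OF _ zero] by (intro bdd_aboveI) auto
  show ?thesis
  proof (rule that)
    show "b - norm (y - x0) \<le> Sup L" if "(y, b) \<in> G" for y b
      using that by (intro cSup_upper[OF _ bdd]) (auto simp: L_def)
    show "Sup L \<le> norm (z + x0) - d" if "(z, d) \<in> G" for z d
      using that compatible by (intro cSup_least[OF nonempty]) (auto simp: L_def)
  qed
qed

lemma norming_graph_extension_le_norm:
  assumes G: "norming_graph v G" and yb: "(y, b) \<in> G"
    and lower: "\<And>y b. (y, b) \<in> G \<Longrightarrow> b - norm (y - x0) \<le> c"
    and upper: "\<And>z d. (z, d) \<in> G \<Longrightarrow> c \<le> norm (z + x0) - d"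
  shows "b + t * c \<le> norm (y + t *\<^sub>R x0)"
proof (cases t "0::real" rule: linorder_cases)
  case equal
  then show ?thesis using norming_graph_le_norm[OF G yb] by simp
next
  case greater
  have "c \<le> norm (inverse t *\<^sub>R y + x0) - inverse t * b"
    using upper[OF norming_graph_scale[OF G yb]] .
  also have "inverse t *\<^sub>R y + x0 = inverse t *\<^sub>R (y + t *\<^sub>R x0)"
    using greater by (simp add: scaleR_add_right)
  finally have "t * c \<le> t * (norm (inverse t *\<^sub>R (y + t *\<^sub>R x0)) - inverse t * b)"
    using greater by (simp add: mult_left_mono)
  also have "\<dots> = norm (y + t *\<^sub>R x0) - b"
    using greater by (simp add: right_diff_distrib mult.assoc[symmetric])
  finally show ?thesis by simp
next
  case less
  have "(- inverse t) * b - norm ((- inverse t) *\<^sub>R y - x0) \<le> c"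
    using lower[OF norming_graph_scale[OF G yb]] .
  also have "(- inverse t) *\<^sub>R y - x0 = (- inverse t) *\<^sub>R (y + t *\<^sub>R x0)"
    using less by (simp add: scaleR_add_right)
  finally have "(- t) * ((- inverse t) * b - norm ((- inverse t) *\<^sub>R (y + t *\<^sub>R x0))) \<le> (- t) * c"
    using less by (simp add: mult_left_mono)
  then show ?thesis
    using less by (simp add: right_diff_distrib mult.assoc[symmetric])
qed

lemma norming_graph_extend:
  assumes G: "norming_graph v G" and x0: "\<forall>a. (x0, a) \<notin> G"
  shows "\<exists>G'. norming_graph v G' \<and> G \<subset> G'"
proof -
  obtain c where lower: "\<And>y b. (y, b) \<in> G \<Longrightarrow> b - norm (y - x0) \<le> c"
    and upper: "\<And>z d. (z, d) \<in> G \<Longrightarrow> c \<le> norm (z + x0) - d"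
    using norming_graph_extension_value[OF G] by blast
  define G' where "G' = {(y + t *\<^sub>R x0, b + t * c) | y b t. (y, b) \<in> G}"
  have "norming_graph v G'"
    unfolding norming_graph_def
  proof (intro conjI allI impI)
    fix x a y b assume "(x, a) \<in> G'" "(y, b) \<in> G'"
    then obtain x1 a1 s y1 b1 t where "x = x1 + s *\<^sub>R x0" "a = a1 + s * c" "(x1, a1) \<in> G"
      "y = y1 + t *\<^sub>R x0" "b = b1 + t * c" "(y1, b1) \<in> G"
      unfolding G'_def by blast
    then show "(x + y, a + b) \<in> G'" unfolding G'_def
      by (intro CollectI exI[of _ "x1 + y1"] exI[of _ "a1 + b1"] exI[of _ "s + t"])
        (auto simp: norming_graph_add[OF G] algebra_simps)
  next
    fix x a r assume "(x, a) \<in> G'"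
    then obtain y b t where "x = y + t *\<^sub>R x0" "a = b + t * c" "(y, b) \<in> G"
      unfolding G'_def by blast
    moreover have "r *\<^sub>R x = r *\<^sub>R y + (r * t) *\<^sub>R x0" "r * a = r * b + (r * t) * c"
      using calculation by (simp_all add: algebra_simps)
    ultimately show "(r *\<^sub>R x, r * a) \<in> G'"
      unfolding G'_def using norming_graph_scale[OF G] by blast
  next
    fix a assume "(0, a) \<in> G'"
    then obtain y b t where e: "0 = y + t *\<^sub>R x0" "a = b + t * c" "(y, b) \<in> G"
      unfolding G'_def by blast
    show "a = 0"
    proof (cases "t = 0")
      case True
      then show ?thesis using e norming_graph_zero[OF G] by auto
    next
      case False
      then have "x0 = (- inverse t) *\<^sub>R y"
        using e(1) by (simp add: eq_neg_iff_add_eq_0[symmetric] add.commute)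
      then show ?thesis using norming_graph_scale[OF G e(3), of "- inverse t"] x0 by simp
    qed
  next
    show "(v, norm v) \<in> G'" unfolding G'_def
      by (intro CollectI exI[of _ v] exI[of _ "norm v"] exI[of _ 0])
        (simp add: norming_graph_norming[OF G])
  next
    fix x a assume "(x, a) \<in> G'"
    then show "a \<le> norm x"
      unfolding G'_def using norming_graph_extension_le_norm[OF G _ lower upper] by blast
  qed
  moreover have "G \<subseteq> G'"
    unfolding G'_def by (force intro: exI[of _ 0])
  moreover have "(x0, c) \<in> G'"
    unfolding G'_def using norming_graph_scale[OF G norming_graph_norming[OF G], of 0]
    by (intro CollectI exI[of _ 0] exI[of _ 0] exI[of _ 1]) simp
  ultimately show ?thesis using x0 by blast
qed

lemma hahn_banach_norming_functional:
  fixes v :: "'a::real_normed_vector"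
  assumes "v \<noteq> 0"
  obtains f where "bounded_linear f" "\<And>x. \<bar>f x\<bar> \<le> norm x" "f v = norm v"
proof -
  have "\<exists>M\<in>{G. norming_graph v G}. \<forall>X\<in>{G. norming_graph v G}. M \<subseteq> X \<longrightarrow> X = M"
  proof (rule Zorn_Lemma2, intro ballI)
    fix C assume C: "C \<in> chains {G. norming_graph v G}"
    show "\<exists>U\<in>{G. norming_graph v G}. \<forall>X\<in>C. X \<subseteq> U"
    proof (cases "C = {}")
      case True
      then show ?thesis using norming_graph_line[OF assms] by blast
    next
      case False
      then have "norming_graph v (\<Union>C)"
        using norming_graph_Union_chain C unfolding chains_def by blast
      then show ?thesis by blast
    qed
  qed
  then obtain M where M: "norming_graph v M"
    and maximal: "\<And>X. norming_graph v X \<Longrightarrow> M \<subseteq> X \<Longrightarrow> X = M"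
    by blast
  have total: "\<exists>a. (x, a) \<in> M" for x
    using norming_graph_extend[OF M] maximal by blast
  define f where "f x = (THE a. (x, a) \<in> M)" for x
  have graph: "(x, f x) \<in> M" for x
    unfolding f_def using total[of x] norming_graph_unique[OF M] by (metis theI)
  have f_eq: "(x, a) \<in> M \<Longrightarrow> f x = a" for x a
    using norming_graph_unique[OF M graph] by blast
  have add: "f (x + y) = f x + f y" for x y
    using f_eq[OF norming_graph_add[OF M graph graph]] .
  have scale: "f (c *\<^sub>R x) = c * f x" for c x
    using f_eq[OF norming_graph_scale[OF M graph]] .
  have bound: "\<bar>f x\<bar> \<le> norm x" for x
    using norming_graph_le_norm[OF M graph, of x] norming_graph_le_norm[OF M graph, of "- x"]
      scale[of "-1" x] by simp
  have "bounded_linear f"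
    by (rule bounded_linear_intro[where K=1]) (use add scale bound in auto)
  then show ?thesis
    using that bound f_eq[OF norming_graph_norming[OF M]] by blast
qed

section \<open>Finite-rank operators\<close>

definition cfunctional :: "('a::complex_banach \<Rightarrow> complex) \<Rightarrow> bool" where
  "cfunctional \<phi> \<longleftrightarrow> bounded_linear \<phi> \<and> (\<forall>c x. \<phi> (cscale c x) = c * \<phi> x)"

lemma cfunctional_divide: "cfunctional \<phi> \<Longrightarrow> cfunctional (\<lambda>x. \<phi> x / c)"
  by (auto simp: cfunctional_def intro: bounded_linear_compose[OF bounded_linear_divide])

lemma cfunctional_complexification:
  fixes f :: "'a::complex_banach \<Rightarrow> real"
  assumes f: "bounded_linear f"
  shows "cfunctional (\<lambda>y. Complex (f y) (- f (cscale \<i> y)))"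
proof -
  interpret f: bounded_linear f by fact
  have i: "bounded_linear (\<lambda>y. cscale \<i> (y::'a))"
    by (rule bounded_linear_intro[where K=1]) (auto simp: cscale_add_right norm_cscale cscale_scaleR)
  have "bounded_linear (\<lambda>y. complex_of_real (- f (cscale \<i> y)))"
    by (intro bounded_linear_compose[OF bounded_linear_of_real] bounded_linear_minus
        bounded_linear_compose[OF f i])
  then have "bounded_linear (\<lambda>y. complex_of_real (f y) + \<i> * complex_of_real (- f (cscale \<i> y)))"
    by (intro bounded_linear_add bounded_linear_compose[OF bounded_linear_mult_right]
        bounded_linear_compose[OF bounded_linear_of_real f])
  then have linear: "bounded_linear (\<lambda>y. Complex (f y) (- f (cscale \<i> y)))"
    by (simp add: Complex_eq)
  have real_part: "f (cscale c y) = Re c * f y + Im c * f (cscale \<i> y)" for c y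
    by (simp add: cscale_Re_Im[of c y] f.add f.scaleR)
  have imaginary_part: "f (cscale \<i> (cscale c y)) = Re c * f (cscale \<i> y) - Im c * f y" for c y
  proof -
    have "cscale \<i> (cscale c y) = Re c *\<^sub>R cscale \<i> y + Im c *\<^sub>R (- y)"
      by (subst cscale_left_commute, subst cscale_Re_Im) (simp only: cscale_ii_ii)
    then show ?thesis by (simp add: f.diff f.scaleR)
  qed
  show ?thesis
    unfolding cfunctional_def
  proof (intro conjI allI linear)
    fix c y
    show "Complex (f (cscale c y)) (- f (cscale \<i> (cscale c y))) = c * Complex (f y) (- f (cscale \<i> y))"
      unfolding real_part[of c y] imaginary_part[of c y] by (simp add: complex_eq_iff algebra_simps)
  qed
qed

lemma cfunctional_separating:
  fixes v :: "'a::complex_banach"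
  assumes "v \<noteq> 0"
  obtains \<psi> where "cfunctional \<psi>" "\<psi> v = 1"
proof -
  obtain f where f: "bounded_linear f" "f v = norm v"
    using hahn_banach_norming_functional[OF assms] by metis
  define \<psi> where "\<psi> y = Complex (f y) (- f (cscale \<i> y))" for y
  have "cfunctional \<psi>"
    unfolding \<psi>_def by (rule cfunctional_complexification[OF f(1)])
  moreover have "\<psi> v \<noteq> 0"
    using f(2) assms by (simp add: \<psi>_def complex_eq_iff)
  ultimately show ?thesis
    using that[of "\<lambda>y. \<psi> y / \<psi> v"] cfunctional_divide[of \<psi> "\<psi> v"] by simp
qed

lemma bop_rank_one:
  assumes "cfunctional \<phi>"
  shows "bop (\<lambda>z. cscale (\<phi> z) (w::'b::complex_banach))"
proof -
  interpret \<phi>: bounded_linear \<phi> using assms cfunctional_def by blast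
  obtain K where K: "\<And>x. norm (\<phi> x) \<le> norm x * K" using \<phi>.bounded by blast
  have "bounded_linear (\<lambda>z. cscale (\<phi> z) w)"
  proof (rule bounded_linear_intro[where K="K * norm w"])
    fix x y show "cscale (\<phi> (x + y)) w = cscale (\<phi> x) w + cscale (\<phi> y) w"
      by (simp add: \<phi>.add cscale_add_left)
  next
    fix r x show "cscale (\<phi> (r *\<^sub>R x)) w = r *\<^sub>R cscale (\<phi> x) w"
      by (simp add: \<phi>.scaleR scaleR_conv_of_real cscale_of_real_mult)
  next
    fix x show "norm (cscale (\<phi> x) w) \<le> norm x * (K * norm w)"
      using K[of x] by (simp add: norm_cscale mult_right_mono mult.assoc[symmetric])
  qed
  then show ?thesis
    using assms by (simp add: bop_def cfunctional_def cscale_assoc)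
qed

text \<open>Every rank-one operator factors through a non-zero S: map into the line spanned by some
y0 with S y0 \<noteq> 0, apply S, and read off the coefficient with a functional normalised at S y0.\<close>

lemma rank_one_in_op_ideal:
  fixes S :: "'x::complex_banach \<Rightarrow> 'y::complex_banach" and w :: "'z2::complex_banach"
  assumes "bop S" "S \<noteq> (\<lambda>x. 0)" and \<phi>: "cfunctional (\<phi> :: 'z1::complex_banach \<Rightarrow> complex)"
  shows "(\<lambda>z. cscale (\<phi> z) w) \<in> op_ideal S"
proof -
  obtain y0 where y0: "S y0 \<noteq> 0" using assms(2) by auto
  obtain \<psi> where \<psi>: "cfunctional \<psi>" "\<psi> (S y0) = 1"
    using cfunctional_separating[OF y0] by blast
  have "(\<lambda>z. cscale (\<psi> (S (cscale (\<phi> z) y0))) w) \<in> op_ideal S"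
    using op_ideal_sandwich[OF bop_rank_one[OF \<psi>(1)] bop_rank_one[OF \<phi>]] .
  then show ?thesis
    using \<psi> assms(1) by (simp add: bop_cscale cfunctional_def)
qed

lemma abs_coeff_mult_infdist_le:
  fixes b y :: "'a::real_normed_vector"
  assumes V: "subspace V" and y: "y - k *\<^sub>R b \<in> V"
  shows "\<bar>k\<bar> * infdist b V \<le> norm y"
proof (cases "k = 0")
  case False
  have "(- inverse k) *\<^sub>R (y - k *\<^sub>R b) \<in> V" by (rule subspace_scale[OF V y])
  moreover have "(- inverse k) *\<^sub>R (y - k *\<^sub>R b) = b - inverse k *\<^sub>R y"
    using False by (simp add: algebra_simps)
  ultimately have "infdist b V \<le> dist b (b - inverse k *\<^sub>R y)" by (metis infdist_le)
  also have "\<dots> = norm y / \<bar>k\<bar>"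
    by (simp add: dist_norm divide_inverse abs_inverse mult.commute)
  finally show ?thesis using False by (simp add: field_simps)
qed simp

text \<open>The library proves closedness of spans only in Euclidean spaces; here it is shown by
induction on the spanning set, the new coefficient of a convergent sequence being Cauchy because
it is controlled by the distance of the new vector to the old span.\<close>

lemma closed_span_finite:
  fixes E :: "'a::real_normed_vector set"
  assumes "finite E"
  shows "closed (span E)"
  using assms
proof (induction E rule: finite_induct)
  case (insert b E)
  show ?case
  proof (cases "b \<in> span E")
    case True
    then show ?thesis using insert by (simp add: span_redundant)
  next
    case False
    define d where "d = infdist b (span E)"
    have d: "d > 0"
      unfolding d_def by (rule infdist_pos_not_in_closed) (use insert False span_zero in auto)
    show ?thesis unfolding closed_sequential_limits
    proof (intro allI impI, elim conjE)
      fix x l assume xs: "\<forall>n. x n \<in> span (insert b E)" and xl: "x \<longlonglongrightarrow> l"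
      have "\<forall>n. \<exists>k. x n - k *\<^sub>R b \<in> span E"
        using xs unfolding span_insert by blast
      then obtain k where k: "\<And>n. x n - k n *\<^sub>R b \<in> span E"
        by metis
      have coeff_diff: "\<bar>k m - k n\<bar> * d \<le> norm (x m - x n)" for m n
      proof -
        have "(x m - k m *\<^sub>R b) - (x n - k n *\<^sub>R b) \<in> span E" using k span_diff by blast
        then have "(x m - x n) - (k m - k n) *\<^sub>R b \<in> span E" by (simp add: algebra_simps)
        then show ?thesis unfolding d_def by (rule abs_coeff_mult_infdist_le[OF subspace_span])
      qed
      have "Cauchy k"
      proof (rule CauchyI)
        fix e :: real assume e: "e > 0"
        obtain M where M: "\<forall>m\<ge>M. \<forall>n\<ge>M. norm (x m - x n) < e * d"
          using CauchyD[OF LIMSEQ_imp_Cauchy[OF xl], of "e * d"] e d by auto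
        show "\<exists>M. \<forall>m\<ge>M. \<forall>n\<ge>M. norm (k m - k n) < e"
        proof (intro exI allI impI)
          fix m n assume "M \<le> m" "M \<le> n"
          then have "\<bar>k m - k n\<bar> * d < e * d" using coeff_diff[of m n] M by fastforce
          then show "norm (k m - k n) < e" using d by simp
        qed
      qed
      then obtain k0 where k0: "k \<longlonglongrightarrow> k0" using Cauchy_convergent_iff convergent_def by blast
      have "(\<lambda>n. x n - k n *\<^sub>R b) \<longlonglongrightarrow> l - k0 *\<^sub>R b"
        by (intro tendsto_intros xl k0)
      then have "l - k0 *\<^sub>R b \<in> span E"
        using insert(3)[unfolded closed_sequential_limits, rule_format, of "\<lambda>n. x n - k n *\<^sub>R b"] k
        by blast
      then show "l \<in> span (insert b E)" unfolding span_insert by blast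
    qed
  qed
qed simp

lemma representation_bounded:
  fixes E :: "'a::real_normed_vector set"
  assumes "finite E" "independent E" "e \<in> E"
  obtains K where "K > 0" "\<And>x. x \<in> span E \<Longrightarrow> \<bar>representation E x e\<bar> \<le> K * norm x"
proof -
  define V where "V = span (E - {e})"
  have "e \<notin> V" using assms(2,3) unfolding V_def dependent_def by blast
  then have d: "infdist e V > 0"
    unfolding V_def using assms(1) closed_span_finite[of "E - {e}"] span_zero
    by (intro infdist_pos_not_in_closed) auto
  have "\<bar>representation E x e\<bar> \<le> inverse (infdist e V) * norm x" if x: "x \<in> span E" for x
  proof -
    have "x = (\<Sum>b\<in>E. representation E x b *\<^sub>R b)"
      using sum_representation_eq[OF assms(2) x assms(1)] by simp
    also have "\<dots> = representation E x e *\<^sub>R e + (\<Sum>b\<in>E - {e}. representation E x b *\<^sub>R b)"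
      using assms(1,3) by (simp add: sum.remove)
    finally have "x - representation E x e *\<^sub>R e = (\<Sum>b\<in>E - {e}. representation E x b *\<^sub>R b)"
      by (simp add: algebra_simps)
    also have "\<dots> \<in> V"
      unfolding V_def by (intro span_sum span_scale span_base) auto
    finally have "\<bar>representation E x e\<bar> * infdist e V \<le> norm x"
      by (rule abs_coeff_mult_infdist_le[OF subspace_span[of "E - {e}", folded V_def]])
    then show ?thesis using d by (simp add: field_simps)
  qed
  moreover have "inverse (infdist e V) > 0" using d by simp
  ultimately show ?thesis using that by blast
qed

lemma bounded_linear_representation_compose:
  fixes F :: "'a::real_normed_vector \<Rightarrow> 'b::real_normed_vector"
  assumes F: "bounded_linear F" and E: "finite E" "independent E" "e \<in> E"
    and FE: "\<And>x. F x \<in> span E"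
  shows "bounded_linear (\<lambda>x. representation E (F x) e)"
proof -
  interpret F: bounded_linear F by fact
  obtain KF where KF: "\<And>x. norm (F x) \<le> norm x * KF" using F.bounded by blast
  obtain K where K: "K > 0" "\<And>x. x \<in> span E \<Longrightarrow> \<bar>representation E x e\<bar> \<le> K * norm x"
    using representation_bounded[OF E] by blast
  show ?thesis
  proof (rule bounded_linear_intro[where K="K * KF"])
    fix x y show "representation E (F (x + y)) e = representation E (F x) e + representation E (F y) e"
      by (simp add: F.add representation_add[OF E(2) FE FE])
  next
    fix c x show "representation E (F (c *\<^sub>R x)) e = c *\<^sub>R representation E (F x) e"
      by (simp add: F.scaleR representation_scale[OF E(2) FE])
  next
    fix x
    have "\<bar>representation E (F x) e\<bar> \<le> K * norm (F x)" using K(2) FE by blast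
    also have "\<dots> \<le> K * (norm x * KF)" using KF K(1) by (simp add: mult_left_mono)
    finally show "norm (representation E (F x) e) \<le> norm x * (K * KF)" by (simp add: ac_simps)
  qed
qed

text \<open>Complex coordinates are recovered from the real ones r through
c_e x = (r_e x - i r_e (i x)) / 2, since the real expansions of x and of i x combine to 2 F x.\<close>

lemma finite_rank_expansion:
  fixes F :: "'a::complex_banach \<Rightarrow> 'b::complex_banach"
  assumes F: "bop F" and E: "finite E" "independent E" and FE: "\<And>x. F x \<in> span E"
  obtains \<phi> where "\<And>e. e \<in> E \<Longrightarrow> cfunctional (\<phi> e)" "\<And>x. F x = (\<Sum>e\<in>E. cscale (\<phi> e x) e)"
proof -
  define r where "r e x = representation E (F x) e" for e x
  define \<psi> where "\<psi> e x = Complex (r e x) (- r e (cscale \<i> x))" for e x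
  have \<psi>: "cfunctional (\<psi> e)" if "e \<in> E" for e
    unfolding \<psi>_def[abs_def] r_def using bop_bounded_linear[OF F] E that FE
    by (intro cfunctional_complexification bounded_linear_representation_compose)
  have expansion: "F x = (\<Sum>e\<in>E. r e x *\<^sub>R e)" for x
    using sum_representation_eq[OF E(2) FE E(1)] by (simp add: r_def)
  have "(\<Sum>e\<in>E. cscale (\<psi> e x) e) = (\<Sum>e\<in>E. r e x *\<^sub>R e - cscale \<i> (r e (cscale \<i> x) *\<^sub>R e))" for x
    by (rule sum.cong[OF refl]) (simp add: \<psi>_def cscale_Re_Im[of "Complex _ _"] cscale_scaleR)
  also have "\<dots> x = F x - cscale \<i> (F (cscale \<i> x))" for x
    by (simp add: sum_subtractf expansion cscale_sum_right)
  also have "\<dots> x = 2 *\<^sub>R F x" for x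
    using F by (simp add: bop_cscale cscale_ii_ii scaleR_2)
  finally have "F x = (\<Sum>e\<in>E. (1/2) *\<^sub>R cscale (\<psi> e x) e)" for x
    by (simp add: scaleR_sum_right[symmetric])
  also have "\<dots> x = (\<Sum>e\<in>E. cscale (\<psi> e x / 2) e)" for x
  proof -
    have "cscale (c / 2) y = (1/2) *\<^sub>R cscale c y" for c and y :: 'b
      using cscale_of_real_mult[of "1/2" c y] by (simp add: field_simps)
    then show ?thesis by simp
  qed
  finally show ?thesis
    using that[of "\<lambda>e x. \<psi> e x / 2"] \<psi> cfunctional_divide by blast
qed

lemma finite_rank_in_op_ideal:
  fixes S :: "'x::complex_banach \<Rightarrow> 'y::complex_banach" and F :: "'z1::complex_banach \<Rightarrow> 'z2::complex_banach"
  assumes S: "bop S" "S \<noteq> (\<lambda>x. 0)" and F: "bop F" and "finite E" and FE: "\<And>z. F z \<in> span E"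
  shows "F \<in> op_ideal S"
proof -
  obtain B where B: "B \<subseteq> E" "independent B" "E \<subseteq> span B"
    by (rule maximal_independent_subset)
  have "F z \<in> span B" for z
    using FE span_minimal[OF B(3) subspace_span] by blast
  then obtain \<phi> where \<phi>: "\<And>e. e \<in> B \<Longrightarrow> cfunctional (\<phi> e)" "\<And>z. F z = (\<Sum>e\<in>B. cscale (\<phi> e z) e)"
    using finite_rank_expansion[OF F finite_subset[OF B(1) \<open>finite E\<close>] B(2)] by blast
  have "(\<lambda>z. \<Sum>e\<in>B. cscale (\<phi> e z) e) \<in> op_ideal S"
    by (rule op_ideal_sum) (rule rank_one_in_op_ideal[OF S \<phi>(1)])
  then show ?thesis using \<phi>(2) by presburger
qed

section \<open>Compact operators\<close>

definition seq_compact_op :: "('a::real_normed_vector \<Rightarrow> 'b::real_normed_vector) \<Rightarrow> bool" where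
  "seq_compact_op C \<longleftrightarrow> bounded_linear C \<and>
     (\<forall>x::nat \<Rightarrow> 'a. bounded (range x) \<longrightarrow> (\<exists>r. strict_mono r \<and> convergent (\<lambda>n. C (x (r n)))))"

lemma seq_compact_opD:
  fixes x :: "nat \<Rightarrow> 'a::real_normed_vector"
  shows "seq_compact_op C \<Longrightarrow> bounded (range x) \<Longrightarrow> \<exists>r. strict_mono r \<and> convergent (\<lambda>n. C (x (r n)))"
  unfolding seq_compact_op_def by blast

lemma seq_compact_op_bounded_linear: "seq_compact_op C \<Longrightarrow> bounded_linear C"
  unfolding seq_compact_op_def by blast

lemma compact_op_imp_seq_compact_op:
  assumes "compact_op T"
  shows "seq_compact_op T"
  unfolding seq_compact_op_def
proof (intro conjI allI impI)
  have T: "bop T" and cpt: "compact (closure (T ` cball 0 1))"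
    using assms unfolding compact_op_def by auto
  interpret T: bounded_linear T using T bop_bounded_linear by blast
  show "bounded_linear T" by (rule T.bounded_linear_axioms)
  fix x :: "nat \<Rightarrow> 'a" assume "bounded (range x)"
  then obtain b where b: "b > 0" "\<And>n. norm (x n) \<le> b" unfolding bounded_pos by blast
  have "T ((1 / b) *\<^sub>R x n) \<in> closure (T ` cball 0 1)" for n
    using b closure_subset by fastforce
  then obtain l r where r: "strict_mono r" "((\<lambda>n. T ((1 / b) *\<^sub>R x n)) \<circ> r) \<longlonglongrightarrow> l"
    using seq_compactE[OF compact_imp_seq_compact[OF cpt]] by metis
  have "(\<lambda>n. b *\<^sub>R T ((1 / b) *\<^sub>R x (r n))) \<longlonglongrightarrow> b *\<^sub>R l"
    using r(2) by (intro tendsto_intros) (simp add: o_def)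
  then have "(\<lambda>n. T (x (r n))) \<longlonglongrightarrow> b *\<^sub>R l"
    using b by (simp add: T.scaleR)
  then show "\<exists>r. strict_mono r \<and> convergent (\<lambda>n. T (x (r n)))"
    using r(1) unfolding convergent_def by blast
qed

lemma seq_compact_op_zero: "seq_compact_op (\<lambda>x. 0)"
  unfolding seq_compact_op_def
  by (auto intro!: exI[of _ id] simp: strict_mono_def convergent_const bounded_linear_zero)

lemma seq_compact_op_compose_left:
  assumes "seq_compact_op C" "bounded_linear A"
  shows "seq_compact_op (\<lambda>x. A (C x))"
  unfolding seq_compact_op_def
proof (intro conjI allI impI)
  show "bounded_linear (\<lambda>x. A (C x))"
    using assms seq_compact_op_bounded_linear bounded_linear_compose by blast
  fix x :: "nat \<Rightarrow> 'a" assume "bounded (range x)"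
  then obtain r l where r: "strict_mono r" "(\<lambda>n. C (x (r n))) \<longlonglongrightarrow> l"
    using seq_compact_opD[OF assms(1)] unfolding convergent_def by blast
  then have "(\<lambda>n. A (C (x (r n)))) \<longlonglongrightarrow> A l"
    using bounded_linear.tendsto[OF assms(2)] by blast
  then show "\<exists>r. strict_mono r \<and> convergent (\<lambda>n. A (C (x (r n))))"
    using r(1) unfolding convergent_def by blast
qed

lemma seq_compact_op_add:
  assumes "seq_compact_op C1" "seq_compact_op C2"
  shows "seq_compact_op (\<lambda>x. C1 x + C2 x)"
  unfolding seq_compact_op_def
proof (intro conjI allI impI)
  show "bounded_linear (\<lambda>x. C1 x + C2 x)"
    using assms seq_compact_op_bounded_linear bounded_linear_add by blast
  fix x :: "nat \<Rightarrow> 'a" assume b: "bounded (range x)"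
  then obtain r1 where r1: "strict_mono r1" "convergent (\<lambda>n. C1 (x (r1 n)))"
    using seq_compact_opD[OF assms(1)] by blast
  have "bounded (range (\<lambda>n. x (r1 n)))" using b by (rule bounded_subset) auto
  then obtain r2 where r2: "strict_mono r2" "convergent (\<lambda>n. C2 (x (r1 (r2 n))))"
    using seq_compact_opD[OF assms(2)] by blast
  have "convergent ((\<lambda>n. C1 (x (r1 n))) \<circ> r2)"
    by (rule convergent_subseq_convergent[OF r1(2) r2(1)])
  then have "convergent (\<lambda>n. C1 (x (r1 (r2 n))) + C2 (x (r1 (r2 n))))"
    using r2(2) by (simp add: o_def convergent_add)
  moreover have "strict_mono (r1 \<circ> r2)" using r1(1) r2(1) by (rule strict_mono_o)
  ultimately show "\<exists>r. strict_mono r \<and> convergent (\<lambda>n. C1 (x (r n)) + C2 (x (r n)))"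
    by (intro exI[of _ "r1 \<circ> r2"]) simp
qed

lemma seq_compact_op_diff:
  assumes "seq_compact_op C1" "seq_compact_op C2"
  shows "seq_compact_op (\<lambda>x. C1 x - C2 x)"
  using seq_compact_op_add[OF assms(1) seq_compact_op_compose_left[OF assms(2) bounded_linear_minus[OF bounded_linear_ident]]]
  by simp

lemma id_minus_seq_compact_op_funpow:
  assumes C: "seq_compact_op C"
  obtains D where "\<And>n. seq_compact_op (D n)" "\<And>n. ((\<lambda>x. x - C x) ^^ n) = (\<lambda>x. x - D n x)"
proof -
  have "\<exists>D. seq_compact_op D \<and> ((\<lambda>x. x - C x) ^^ n) = (\<lambda>x. x - D x)" for n
  proof (induction n)
    case 0
    show ?case using seq_compact_op_zero by auto
  next
    case (Suc n)
    then obtain D where D: "seq_compact_op D" "((\<lambda>x. x - C x) ^^ n) = (\<lambda>x. x - D x)" by blast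
    interpret C: bounded_linear C using C seq_compact_op_bounded_linear by blast
    have "seq_compact_op (\<lambda>x. (D x + C x) - C (D x))"
      by (intro seq_compact_op_diff seq_compact_op_add D(1) C
          seq_compact_op_compose_left[OF D(1) C.bounded_linear_axioms])
    moreover have "((\<lambda>x. x - C x) ^^ Suc n) = (\<lambda>x. x - ((D x + C x) - C (D x)))"
      by (rule ext) (simp add: D(2) C.diff algebra_simps)
    ultimately show ?case by blast
  qed
  then show ?thesis using that by metis
qed

lemma seq_compact_op_close_pair:
  fixes x :: "nat \<Rightarrow> 'a::real_normed_vector"
  assumes "seq_compact_op C" "\<And>n. norm (x n) \<le> 1"
  obtains m n where "m < n" "norm (C (x n) - C (x m)) < 1/2"
proof -
  have "bounded (range x)" unfolding bounded_iff using assms(2) by blast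
  then obtain r where r: "strict_mono r" "Cauchy (\<lambda>n. C (x (r n)))"
    using seq_compact_opD[OF assms(1)] convergent_Cauchy by blast
  then obtain M where "\<forall>m\<ge>M. \<forall>n\<ge>M. norm (C (x (r m)) - C (x (r n))) < 1/2"
    using CauchyD[of _ "1/2"] by fastforce
  then have "norm (C (x (r (Suc M))) - C (x (r M))) < 1/2" by auto
  moreover have "r M < r (Suc M)" using r(1) by (simp add: strict_mono_def)
  ultimately show ?thesis using that by blast
qed

lemma seq_compact_op_approx_fixed_point:
  fixes u :: "nat \<Rightarrow> 'a::real_normed_vector"
  assumes C: "seq_compact_op C" and bounded: "bounded (range u)"
    and approx: "(\<lambda>n. u n - C (u n)) \<longlonglongrightarrow> 0"
  obtains r y where "strict_mono r" "(\<lambda>n. u (r n)) \<longlonglongrightarrow> y" "C y = y"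
proof -
  interpret C: bounded_linear C using C seq_compact_op_bounded_linear by blast
  obtain r y where r: "strict_mono r" and y: "(\<lambda>n. C (u (r n))) \<longlonglongrightarrow> y"
    using seq_compact_opD[OF C bounded] unfolding convergent_def by blast
  have "(\<lambda>n. u (r n) - C (u (r n))) \<longlonglongrightarrow> 0"
    using LIMSEQ_subseq_LIMSEQ[OF approx r] by (simp add: o_def)
  from tendsto_add[OF this y] have u: "(\<lambda>n. u (r n)) \<longlonglongrightarrow> y" by simp
  have "C y = y" using LIMSEQ_unique[OF C.tendsto[OF u] y] .
  then show ?thesis using that r u by blast
qed

section \<open>Riesz theory\<close>

lemma infdist_lessE:
  fixes A :: "'a::metric_space set"
  assumes "A \<noteq> {}" "infdist x A < e"
  obtains a where "a \<in> A" "dist x a < e"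
proof -
  have "bdd_below ((\<lambda>a. dist x a) ` A)" by (rule bdd_belowI[of _ 0]) auto
  then show ?thesis
    using assms that by (auto simp: infdist_notempty cINF_less_iff)
qed

lemma riesz_lemma:
  fixes V W :: "'a::real_normed_vector set"
  assumes V: "subspace V" and W: "subspace W" "closed W" and WV: "W \<subset> V"
  obtains x where "x \<in> V" "norm x = 1" "\<And>w. w \<in> W \<Longrightarrow> 1/2 \<le> norm (x - w)"
proof -
  obtain v where v: "v \<in> V" "v \<notin> W" using WV by blast
  have W_nonempty: "W \<noteq> {}" using W subspace_0 by blast
  define d where "d = infdist v W"
  have d: "d > 0" unfolding d_def using infdist_pos_not_in_closed[OF W(2) W_nonempty v(2)] .
  obtain w0 where w0: "w0 \<in> W" "dist v w0 < 2 * d"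
    using infdist_lessE[OF W_nonempty, of v "2 * d"] d d_def by auto
  have d_le: "d \<le> dist v w" if "w \<in> W" for w unfolding d_def using infdist_le[OF that] .
  define c where "c = norm (v - w0)"
  have c: "c \<ge> d" "c < 2 * d" using d_le[OF w0(1)] w0(2) by (simp_all add: c_def dist_norm)
  define x where "x = (1/c) *\<^sub>R (v - w0)"
  have "x \<in> V"
    unfolding x_def using V v(1) WV w0(1) by (intro subspace_scale subspace_diff) auto
  moreover have "norm x = 1" using c d by (simp add: x_def c_def[symmetric])
  moreover have "1/2 \<le> norm (x - w)" if w: "w \<in> W" for w
  proof -
    have "w0 + c *\<^sub>R w \<in> W" using W(1) w0(1) w by (intro subspace_add subspace_scale) auto
    then have "d \<le> norm (v - (w0 + c *\<^sub>R w))" using d_le by (simp add: dist_norm)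
    also have "v - (w0 + c *\<^sub>R w) = c *\<^sub>R (x - w)" using c d by (simp add: x_def algebra_simps)
    finally have "d \<le> c * norm (x - w)" using c d by simp
    also have "\<dots> \<le> 2 * d * norm (x - w)" using c(2) by (simp add: mult_right_mono)
    finally show ?thesis using d by (simp add: field_simps)
  qed
  ultimately show ?thesis using that by blast
qed

lemma id_minus_compact_bounded_below:
  fixes C :: "'a::real_normed_vector \<Rightarrow> 'a"
  assumes C: "seq_compact_op C" and W: "closed W" "subspace W"
    and no_fixed: "\<And>w. w \<in> W \<Longrightarrow> C w = w \<Longrightarrow> w = 0"
  obtains k where "\<And>w. w \<in> W \<Longrightarrow> norm w \<le> k * norm (w - C w)"
proof (rule ccontr)
  interpret C: bounded_linear C using C seq_compact_op_bounded_linear by blast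
  assume "\<not> thesis"
  then have "\<exists>w\<in>W. norm w > real (Suc n) * norm (w - C w)" for n
    using that by (meson not_le)
  then obtain w where w: "\<And>n. w n \<in> W" "\<And>n. norm (w n) > real (Suc n) * norm (w n - C (w n))"
    by metis
  have w_nonzero: "w n \<noteq> 0" for n using w(2)[of n] by auto
  define u where "u n = (1 / norm (w n)) *\<^sub>R w n" for n
  have u_norm: "norm (u n) = 1" for n using w_nonzero by (simp add: u_def)
  have u_W: "u n \<in> W" for n using W(2) w(1) by (simp add: u_def subspace_scale)
  have "norm (u n - C (u n)) < 1 / real (Suc n)" for n
  proof -
    have "u n - C (u n) = (1 / norm (w n)) *\<^sub>R (w n - C (w n))"
      by (simp add: u_def C.scaleR algebra_simps)
    then have "norm (u n - C (u n)) = norm (w n - C (w n)) / norm (w n)" by simp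
    also have "\<dots> < 1 / real (Suc n)"
      using w(2)[of n] w_nonzero[of n] by (simp add: field_simps del: of_nat_Suc)
    finally show ?thesis .
  qed
  then have "(\<lambda>n. u n - C (u n)) \<longlonglongrightarrow> 0" by (rule LIMSEQ_norm_0)
  moreover have "bounded (range u)" unfolding bounded_iff using u_norm by auto
  ultimately obtain r y where r: "(\<lambda>n. u (r n)) \<longlonglongrightarrow> y" and y: "C y = y"
    using seq_compact_op_approx_fixed_point[OF C] by metis
  have "y \<in> W"
    using W(1)[unfolded closed_sequential_limits, rule_format, of "\<lambda>n. u (r n)"] u_W r by blast
  moreover have "norm y = 1"
    using tendsto_norm[OF r] u_norm by (simp add: LIMSEQ_const_iff)
  ultimately show False using no_fixed y by force
qed

lemma id_minus_compact_infdist_fixed_le: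
  fixes C :: "'a::real_normed_vector \<Rightarrow> 'a"
  assumes C: "seq_compact_op C"
  obtains k where "\<And>x. infdist x {x. C x = x} \<le> k * norm (x - C x)"
proof (rule ccontr)
  interpret C: bounded_linear C using C seq_compact_op_bounded_linear by blast
  define N where "N = {x. C x = x}"
  have N: "subspace N" unfolding N_def subspace_def by (auto simp: C.add C.scaleR C.zero)
  assume "\<not> thesis"
  then have "\<exists>x. infdist x N > real (Suc n) * norm (x - C x)" for n
    using that unfolding N_def by (meson not_le)
  then obtain x where x: "\<And>n. infdist (x n) N > real (Suc n) * norm (x n - C (x n))" by metis
  have x_dist: "infdist (x n) N > 0" for n
    using x[of n] order_le_less_trans[of 0 "real (Suc n) * norm (x n - C (x n))"] by simp
  have "N \<noteq> {}" using N subspace_0 by blast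
  then have "\<exists>a\<in>N. dist (x n) a < 2 * infdist (x n) N" for n
    using infdist_lessE[of N "x n" "2 * infdist (x n) N"] x_dist[of n] by auto
  then obtain m where m: "\<And>n. m n \<in> N" "\<And>n. dist (x n) (m n) < 2 * infdist (x n) N"
    by metis
  define w where "w n = (1 / infdist (x n) N) *\<^sub>R (x n - m n)" for n
  have w_bounded: "norm (w n) \<le> 2" for n
  proof -
    have "norm (w n) = norm (x n - m n) / infdist (x n) N"
      unfolding w_def norm_scaleR using x_dist[of n] by simp
    also have "\<dots> \<le> 2" using m(2)[of n] x_dist[of n] by (simp add: dist_norm field_simps)
    finally show ?thesis .
  qed
  have w_far: "1 \<le> norm (w n - y)" if "y \<in> N" for n y
  proof -
    have "m n + infdist (x n) N *\<^sub>R y \<in> N" using N m(1) that by (intro subspace_add subspace_scale) auto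
    then have "infdist (x n) N \<le> norm (x n - (m n + infdist (x n) N *\<^sub>R y))"
      using infdist_le by (metis dist_norm)
    also have "x n - (m n + infdist (x n) N *\<^sub>R y) = infdist (x n) N *\<^sub>R (w n - y)"
      using x_dist[of n] by (simp add: w_def algebra_simps)
    finally show ?thesis using x_dist[of n] by simp
  qed
  have "norm (w n - C (w n)) < 1 / real (Suc n)" for n
  proof -
    have "C (m n) = m n" using m(1) unfolding N_def by simp
    then have "w n - C (w n) = (1 / infdist (x n) N) *\<^sub>R (x n - C (x n))"
      by (simp add: w_def C.scaleR C.diff algebra_simps)
    then have "norm (w n - C (w n)) = norm (x n - C (x n)) / infdist (x n) N"
      using x_dist[of n] by simp
    also have "\<dots> < 1 / real (Suc n)"
      using x[of n] x_dist[of n] by (simp add: field_simps del: of_nat_Suc)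
    finally show ?thesis .
  qed
  then have "(\<lambda>n. w n - C (w n)) \<longlonglongrightarrow> 0" by (rule LIMSEQ_norm_0)
  moreover have "bounded (range w)" unfolding bounded_iff using w_bounded by blast
  ultimately obtain r y where r: "(\<lambda>n. w (r n)) \<longlonglongrightarrow> y" and y: "C y = y"
    using seq_compact_op_approx_fixed_point[OF C] by metis
  have "(\<lambda>n. norm (w (r n) - y)) \<longlonglongrightarrow> 0"
    using tendsto_norm[OF tendsto_diff[OF r tendsto_const[of y]]] by simp
  then obtain n where "norm (w (r n) - y) < 1"
    using LIMSEQ_D[of _ 0 1] by fastforce
  then show False using w_far[of y "r n"] y unfolding N_def by simp
qed

lemma id_minus_compact_bounded_preimage:
  fixes C :: "'a::real_normed_vector \<Rightarrow> 'a"
  assumes C: "seq_compact_op C"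
  obtains k where "\<And>x. \<exists>z. z - C z = x - C x \<and> norm z \<le> k * norm (x - C x)"
proof -
  interpret C: bounded_linear C using C seq_compact_op_bounded_linear by blast
  define N where "N = {x. C x = x}"
  obtain k where k: "\<And>x. infdist x N \<le> k * norm (x - C x)"
    using id_minus_compact_infdist_fixed_le[OF C] unfolding N_def by blast
  have "\<exists>z. z - C z = x - C x \<and> norm z \<le> 2 * k * norm (x - C x)" for x
  proof (cases "x \<in> N")
    case True
    then show ?thesis using k[of x] unfolding N_def by (intro exI[of _ 0]) (simp add: C.zero)
  next
    case False
    have "closed N"
      unfolding N_def using closed_Collect_eq[of C "\<lambda>x. x"] C.continuous_on continuous_on_id
      by blast
    moreover have "0 \<in> N" unfolding N_def by (simp add: C.zero)
    ultimately have "infdist x N > 0" using infdist_pos_not_in_closed False by blast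
    then obtain m where m: "m \<in> N" "dist x m < 2 * infdist x N"
      using infdist_lessE[of N x "2 * infdist x N"] \<open>0 \<in> N\<close> by auto
    have "(x - m) - C (x - m) = x - C x" using m(1) unfolding N_def by (simp add: C.diff)
    moreover have "norm (x - m) \<le> 2 * k * norm (x - C x)"
      using m(2) k[of x] by (simp add: dist_norm)
    ultimately show ?thesis by blast
  qed
  then show ?thesis using that by blast
qed

lemma id_minus_compact_closed_range:
  fixes C :: "'a::real_normed_vector \<Rightarrow> 'a"
  assumes C: "seq_compact_op C"
  shows "closed (range (\<lambda>x. x - C x))"
  unfolding closed_sequential_limits
proof (intro allI impI, elim conjE)
  interpret C: bounded_linear C using C seq_compact_op_bounded_linear by blast
  obtain k where k: "\<And>x. \<exists>z. z - C z = x - C x \<and> norm z \<le> k * norm (x - C x)"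
    using id_minus_compact_bounded_preimage[OF C] by blast
  fix y l assume y_range: "\<forall>n. y n \<in> range (\<lambda>x. x - C x)" and y: "y \<longlonglongrightarrow> l"
  have "\<forall>n. \<exists>z. z - C z = y n \<and> norm z \<le> k * norm (y n)"
  proof
    fix n
    obtain x where "y n = x - C x" using y_range by blast
    then show "\<exists>z. z - C z = y n \<and> norm z \<le> k * norm (y n)" using k[of x] by simp
  qed
  then obtain z where z: "\<And>n. z n - C (z n) = y n" "\<And>n. norm (z n) \<le> k * norm (y n)"
    by metis
  obtain b where b: "\<And>n. norm (y n) \<le> b"
    using convergent_imp_bounded[OF y] unfolding bounded_iff by blast
  have "norm (z n) \<le> \<bar>k\<bar> * b" for n
    using z(2)[of n] b[of n] by (smt (verit) abs_ge_self abs_mult_pos mult_mono norm_ge_zero)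
  then have "bounded (range z)" unfolding bounded_iff by blast
  then obtain r u where r: "strict_mono r" and u: "(\<lambda>n. C (z (r n))) \<longlonglongrightarrow> u"
    using seq_compact_opD[OF C] unfolding convergent_def by blast
  have y_r: "(\<lambda>n. y (r n)) \<longlonglongrightarrow> l" using LIMSEQ_subseq_LIMSEQ[OF y r] by (simp add: o_def)
  have "(\<lambda>n. y (r n) + C (z (r n))) \<longlonglongrightarrow> l + u" by (intro tendsto_add y_r u)
  then have "(\<lambda>n. z (r n)) \<longlonglongrightarrow> l + u" using z(1) by (simp add: algebra_simps)
  then have "(\<lambda>n. z (r n) - C (z (r n))) \<longlonglongrightarrow> (l + u) - C (l + u)"
    by (intro tendsto_diff C.tendsto)
  then have "(\<lambda>n. y (r n)) \<longlonglongrightarrow> (l + u) - C (l + u)" by (simp only: z(1))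
  then have "l = (l + u) - C (l + u)" using y_r by (rule LIMSEQ_unique[rotated])
  then show "l \<in> range (\<lambda>x. x - C x)" by blast
qed

lemma bounded_linear_funpow:
  fixes f :: "'a::real_normed_vector \<Rightarrow> 'a"
  assumes "bounded_linear f"
  shows "bounded_linear (f ^^ n)"
proof (induction n)
  case 0
  show ?case by (simp add: id_def)
next
  case (Suc n)
  then show ?case using bounded_linear_compose[OF assms, of "f ^^ n"] by simp
qed

lemma closed_kernel_bounded_linear:
  "bounded_linear f \<Longrightarrow> closed {x. f x = (0::'b::real_normed_vector)}"
  using closed_Collect_eq[of f "\<lambda>x. 0"]
  by (simp add: bounded_linear.continuous_on[OF _ continuous_on_id])

lemma funpow_kernel_mono:
  fixes f :: "'a::zero \<Rightarrow> 'a"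
  assumes "f 0 = 0" "(f ^^ m) x = 0" "m \<le> n"
  shows "(f ^^ n) x = 0"
proof -
  have zero: "(f ^^ k) 0 = 0" for k by (induction k) (simp_all add: assms(1))
  have "(f ^^ n) x = (f ^^ (n - m)) ((f ^^ m) x)"
    using assms(3) by (metis comp_apply funpow_add le_add_diff_inverse2)
  then show ?thesis using assms(2) zero by simp
qed

lemma funpow_range_antimono:
  fixes f :: "'a \<Rightarrow> 'a"
  shows "m \<le> n \<Longrightarrow> range (f ^^ n) \<subseteq> range (f ^^ m)"
proof
  fix y assume "m \<le> n" "y \<in> range (f ^^ n)"
  then obtain z where "y = (f ^^ (m + (n - m))) z" by auto
  then show "y \<in> range (f ^^ m)" by (simp add: funpow_add)
qed

lemma funpow_kernel_stable:
  fixes f :: "'a::zero \<Rightarrow> 'a"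
  assumes "\<And>x. (f ^^ Suc p) x = 0 \<Longrightarrow> (f ^^ p) x = 0" "(f ^^ (p + k)) x = 0"
  shows "(f ^^ p) x = 0"
  using assms(2)
proof (induction k arbitrary: x)
  case (Suc k)
  have split: "(f ^^ (n + k)) x = (f ^^ n) ((f ^^ k) x)" for n
    by (simp add: funpow_add)
  have "(f ^^ Suc p) ((f ^^ k) x) = 0"
    using Suc.prems split[of "Suc p"] by simp
  then have "(f ^^ (p + k)) x = 0"
    using assms(1) split[of p] by simp
  then show ?case by (rule Suc.IH)
qed simp

lemma funpow_range_stable:
  fixes f :: "'a \<Rightarrow> 'a"
  assumes "range (f ^^ q) \<subseteq> range (f ^^ Suc q)"
  shows "range (f ^^ q) \<subseteq> range (f ^^ (q + k))"
proof (induction k)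
  case (Suc k)
  have split: "range (f ^^ (k + n)) = (f ^^ k) ` range (f ^^ n)" for n
    by (simp add: funpow_add image_comp)
  have "range (f ^^ (q + k)) = (f ^^ k) ` range (f ^^ q)"
    using split[of q] by (simp add: ac_simps)
  also have "\<dots> \<subseteq> (f ^^ k) ` range (f ^^ Suc q)" using assms by (rule image_mono)
  also have "\<dots> = range (f ^^ (q + Suc k))"
    using split[of "Suc q"] by (simp add: ac_simps)
  finally show ?case using Suc.IH by blast
qed simp

lemma riesz_separated_sequence:
  fixes N :: "'a::real_normed_vector set"
  assumes N: "subspace N" and infinite_dim: "\<And>F. finite F \<Longrightarrow> F \<subseteq> N \<Longrightarrow> span F \<noteq> N"
  obtains x :: "nat \<Rightarrow> 'a"
  where "\<And>n. x n \<in> N" "\<And>n. norm (x n) = 1" "\<And>m n. m < n \<Longrightarrow> 1/2 \<le> norm (x n - x m)"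
proof -
  have "\<exists>x. finite F \<and> F \<subseteq> N \<longrightarrow> x \<in> N \<and> norm x = 1 \<and> (\<forall>w\<in>span F. 1/2 \<le> norm (x - w))" for F
  proof (cases "finite F \<and> F \<subseteq> N")
    case True
    then have "span F \<subset> N" using infinite_dim N span_minimal by blast
    then show ?thesis
      using riesz_lemma[OF N subspace_span closed_span_finite] True by metis
  qed auto
  then obtain g where g: "\<And>F. finite F \<Longrightarrow> F \<subseteq> N \<Longrightarrow>
      g F \<in> N \<and> norm (g F) = 1 \<and> (\<forall>w\<in>span F. 1/2 \<le> norm (g F - w))"
    by metis
  define F where "F = rec_nat {} (\<lambda>_ F. insert (g F) F)"
  have F_Suc: "F (Suc n) = insert (g (F n)) (F n)" for n by (simp add: F_def)
  have F: "finite (F n) \<and> F n \<subseteq> N" for n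
    by (induction n) (use g in \<open>auto simp: F_def\<close>)
  have earlier_in_F: "m < n \<Longrightarrow> g (F m) \<in> F n" for m n
    by (induction n) (auto simp: F_Suc less_Suc_eq)
  show ?thesis
  proof (rule that[of "\<lambda>n. g (F n)"])
    show "g (F n) \<in> N" "norm (g (F n)) = 1" for n using g F by blast+
    show "1/2 \<le> norm (g (F n) - g (F m))" if "m < n" for m n
      using g[of "F n"] F[of n] span_base[OF earlier_in_F[OF that]] by blast
  qed
qed

lemma seq_compact_op_fixed_space_finite_dim:
  fixes C :: "'a::real_normed_vector \<Rightarrow> 'a"
  assumes C: "seq_compact_op C"
  obtains E where "finite E" "independent E" "span E = {x. C x = x}"
proof -
  interpret C: bounded_linear C using C seq_compact_op_bounded_linear by blast
  define N where "N = {x. C x = x}"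
  have N: "subspace N" unfolding N_def subspace_def by (auto simp: C.add C.scaleR C.zero)
  have "\<exists>F. finite F \<and> F \<subseteq> N \<and> span F = N"
  proof (rule ccontr)
    assume "\<not> ?thesis"
    then have "span F \<noteq> N" if "finite F" "F \<subseteq> N" for F using that by blast
    then obtain x :: "nat \<Rightarrow> 'a" where x: "\<And>n. x n \<in> N" "\<And>n. norm (x n) = 1"
        "\<And>m n. m < n \<Longrightarrow> 1/2 \<le> norm (x n - x m)"
      using riesz_separated_sequence[OF N] by blast
    then have "norm (x n) \<le> 1" for n by simp
    then obtain m n where "m < n" "norm (C (x n) - C (x m)) < 1/2"
      by (rule seq_compact_op_close_pair[OF C])
    moreover have "C (x k) = x k" for k using x(1) unfolding N_def by blast
    ultimately show False using x(3) by (metis not_less)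
  qed
  then obtain F where F: "finite F" "F \<subseteq> N" "span F = N" by blast
  obtain B where B: "B \<subseteq> F" "independent B" "F \<subseteq> span B"
    by (rule maximal_independent_subset)
  have "span B = N"
    using B F span_mono span_minimal[OF B(3) subspace_span] by blast
  then show ?thesis using that B(2) finite_subset[OF B(1) F(1)] unfolding N_def by blast
qed

text \<open>Ascent and descent of 1 - C are finite: otherwise Riesz's lemma produces a sequence in
the unit ball with pairwise separated images under C, contradicting compactness.\<close>

lemma id_minus_compact_ascent:
  fixes C :: "'a::real_normed_vector \<Rightarrow> 'a"
  assumes C: "seq_compact_op C"
  obtains p where "\<And>x. ((\<lambda>x. x - C x) ^^ Suc p) x = 0 \<Longrightarrow> ((\<lambda>x. x - C x) ^^ p) x = 0"
proof (rule ccontr)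
  define L where "L x = x - C x" for x
  interpret C: bounded_linear C using C seq_compact_op_bounded_linear by blast
  have L: "bounded_linear L"
    unfolding L_def[abs_def] by (intro bounded_linear_sub bounded_linear_ident C.bounded_linear_axioms)
  have L0: "L 0 = 0" by (simp add: L_def C.zero)
  have kernel: "subspace {x. (L ^^ n) x = 0}" "closed {x. (L ^^ n) x = 0}" for n
    using linear_subspace_kernel[OF bounded_linear.linear] closed_kernel_bounded_linear
      bounded_linear_funpow[OF L] by blast+
  assume "\<not> thesis"
  then have "\<exists>x. (L ^^ Suc n) x = 0 \<and> (L ^^ n) x \<noteq> 0" for n
    using that unfolding L_def[abs_def] by blast
  then have "{x. (L ^^ n) x = 0} \<subset> {x. (L ^^ Suc n) x = 0}" for n
    using funpow_kernel_mono[of L, OF L0, of n _ "Suc n"] by auto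
  then have "\<exists>x. (L ^^ Suc n) x = 0 \<and> norm x = 1 \<and> (\<forall>w. (L ^^ n) w = 0 \<longrightarrow> 1/2 \<le> norm (x - w))" for n
    by (rule riesz_lemma[OF kernel(1)[of "Suc n"] kernel[of n]]) blast+
  then obtain x where x: "\<And>n. (L ^^ Suc n) (x n) = 0" "\<And>n. norm (x n) = 1"
    "\<And>n w. (L ^^ n) w = 0 \<Longrightarrow> 1/2 \<le> norm (x n - w)"
    by metis
  have "norm (x n) \<le> 1" for n using x(2) by simp
  then obtain m n where mn: "m < n" "norm (C (x n) - C (x m)) < 1/2"
    by (rule seq_compact_op_close_pair[OF C])
  have "(L ^^ n) (L (x n)) = 0" using x(1)[of n] by (simp add: funpow_Suc_right del: funpow.simps)
  moreover have "(L ^^ n) (x m) = 0" "(L ^^ n) (L (x m)) = 0"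
    using funpow_kernel_mono[of L, OF L0 x(1)[of m], of n] funpow_kernel_mono[of L, OF L0 x(1)[of m], of "Suc n"] mn(1)
    by (simp_all add: funpow_Suc_right del: funpow.simps)
  ultimately have "(L ^^ n) (L (x n) + x m - L (x m)) = 0"
    using bounded_linear.linear[OF bounded_linear_funpow[OF L, of n]] by (simp add: linear_add linear_diff)
  then have "1/2 \<le> norm (x n - (L (x n) + x m - L (x m)))" by (rule x(3))
  also have "x n - (L (x n) + x m - L (x m)) = C (x n) - C (x m)" by (simp add: L_def)
  finally show False using mn(2) by simp
qed

lemma id_minus_compact_descent:
  fixes C :: "'a::real_normed_vector \<Rightarrow> 'a"
  assumes C: "seq_compact_op C"
  obtains q where "range ((\<lambda>x. x - C x) ^^ q) \<subseteq> range ((\<lambda>x. x - C x) ^^ Suc q)"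
proof (rule ccontr)
  define L where "L x = x - C x" for x
  obtain D where D: "\<And>n. seq_compact_op (D n)" "\<And>n. (L ^^ n) = (\<lambda>x. x - D n x)"
    using id_minus_seq_compact_op_funpow[OF C] unfolding L_def[symmetric] by blast
  interpret C: bounded_linear C using C seq_compact_op_bounded_linear by blast
  have L: "bounded_linear L"
    unfolding L_def[abs_def] by (intro bounded_linear_sub bounded_linear_ident C.bounded_linear_axioms)
  have range: "subspace (range (L ^^ n))" "closed (range (L ^^ n))" for n
    using linear_subspace_image[OF bounded_linear.linear[OF bounded_linear_funpow[OF L]] subspace_UNIV]
    by (simp, simp only: D(2) id_minus_compact_closed_range[OF D(1)])
  assume "\<not> thesis"
  then have "\<not> range (L ^^ n) \<subseteq> range (L ^^ Suc n)" for n
    using that unfolding L_def[abs_def] by blast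
  then have "range (L ^^ Suc n) \<subset> range (L ^^ n)" for n
    using funpow_range_antimono[of n "Suc n" L] le_SucI[OF order_refl] by blast
  then have "\<exists>x. x \<in> range (L ^^ n) \<and> norm x = 1 \<and> (\<forall>w\<in>range (L ^^ Suc n). 1/2 \<le> norm (x - w))" for n
    by (rule riesz_lemma[OF range(1)[of n] range[of "Suc n"]]) blast+
  then obtain x where x: "\<And>n. x n \<in> range (L ^^ n)" "\<And>n. norm (x n) = 1"
    "\<And>n w. w \<in> range (L ^^ Suc n) \<Longrightarrow> 1/2 \<le> norm (x n - w)"
    by metis
  have "norm (x n) \<le> 1" for n using x(2) by simp
  then obtain m n where mn: "m < n" "norm (C (x n) - C (x m)) < 1/2"
    by (rule seq_compact_op_close_pair[OF C])
  have L_range: "L y \<in> range (L ^^ Suc k)" if "y \<in> range (L ^^ k)" for y k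
    using that by auto
  have "L (x m) \<in> range (L ^^ Suc m)" using L_range[OF x(1)] .
  moreover have "x n \<in> range (L ^^ Suc m)" "L (x n) \<in> range (L ^^ Suc m)"
    using funpow_range_antimono[of "Suc m" n L] funpow_range_antimono[of "Suc m" "Suc n" L]
      x(1)[of n] L_range[OF x(1)[of n]] mn(1) by auto
  ultimately have "L (x m) + x n - L (x n) \<in> range (L ^^ Suc m)"
    by (intro subspace_add subspace_diff range(1))
  then have "1/2 \<le> norm (x m - (L (x m) + x n - L (x n)))" by (rule x(3))
  also have "x m - (L (x m) + x n - L (x n)) = - (C (x n) - C (x m))" by (simp add: L_def)
  finally show False using mn(2) by (simp only: norm_minus_cancel)
qed

lemma id_minus_compact_riesz_index:
  fixes C :: "'a::real_normed_vector \<Rightarrow> 'a"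
  assumes C: "seq_compact_op C"
  obtains p where "\<And>j x. ((\<lambda>x. x - C x) ^^ (p + j)) x = 0 \<Longrightarrow> ((\<lambda>x. x - C x) ^^ p) x = 0"
    and "\<And>j. range ((\<lambda>x. x - C x) ^^ p) \<subseteq> range ((\<lambda>x. x - C x) ^^ (p + j))"
proof -
  define L where "L x = x - C x" for x
  have L0: "L 0 = 0"
    using linear_0[OF bounded_linear.linear[OF seq_compact_op_bounded_linear[OF C]]] by (simp add: L_def)
  obtain a where a: "\<And>x. (L ^^ Suc a) x = 0 \<Longrightarrow> (L ^^ a) x = 0"
    using id_minus_compact_ascent[OF C] unfolding L_def[symmetric] by blast
  obtain d where d: "range (L ^^ d) \<subseteq> range (L ^^ Suc d)"
    using id_minus_compact_descent[OF C] unfolding L_def[symmetric] by blast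
  have "(L ^^ (a + d)) x = 0" if "(L ^^ (a + d + j)) x = 0" for j x
    using funpow_kernel_stable[OF a, of "d + j" x] funpow_kernel_mono[of L, OF L0, of a x "a + d"] that
    by (simp add: ac_simps)
  moreover have "range (L ^^ (a + d)) \<subseteq> range (L ^^ (a + d + j))" for j
    using funpow_range_antimono[of d "a + d" L] funpow_range_stable[OF d, of "a + j"]
    by (simp add: ac_simps)
  ultimately show ?thesis using that unfolding L_def[abs_def] by blast
qed

text \<open>A map F with values in W is recovered from G \<circ> F = H when G is bounded below on W;
linearity, complex homogeneity and boundedness of F are all inherited from H.\<close>

lemma bop_lift:
  fixes G :: "'b::complex_banach \<Rightarrow> 'c::complex_banach" and H :: "'a::complex_banach \<Rightarrow> 'c"
  assumes W: "subspace W" "\<And>c w. w \<in> W \<Longrightarrow> cscale c w \<in> W"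
    and G: "bop G" and H: "bop H"
    and below: "\<And>w. w \<in> W \<Longrightarrow> norm w \<le> k * norm (G w)"
    and H_range: "\<And>x. H x \<in> G ` W"
  obtains F where "bop F" "\<And>x. F x \<in> W" "\<And>x. G (F x) = H x"
proof -
  interpret G: bounded_linear G using G bop_bounded_linear by blast
  interpret H: bounded_linear H using H bop_bounded_linear by blast
  define F where "F x = (SOME w. w \<in> W \<and> G w = H x)" for x
  have "\<exists>w. w \<in> W \<and> G w = H x" for x using H_range[of x] by (metis imageE)
  then have "F x \<in> W \<and> G (F x) = H x" for x
    unfolding F_def by (rule someI_ex)
  then have FW: "F x \<in> W" and GF: "G (F x) = H x" for x by auto
  have unique: "a = b" if "a \<in> W" "b \<in> W" "G a = G b" for a b
  proof -
    have "norm (a - b) \<le> k * norm (G (a - b))" using below subspace_diff[OF W(1) that(1,2)] .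
    then show ?thesis using that(3) by (simp add: G.diff)
  qed
  obtain K where K: "\<And>x. norm (H x) \<le> norm x * K" using H.bounded by blast
  have "bounded_linear F"
  proof (rule bounded_linear_intro[where K="\<bar>k\<bar> * K"])
    show "F (x + y) = F x + F y" for x y
      by (rule unique) (auto simp: FW subspace_add[OF W(1)] GF G.add H.add)
    show "F (r *\<^sub>R x) = r *\<^sub>R F x" for r x
      by (rule unique) (auto simp: FW subspace_scale[OF W(1)] GF G.scaleR H.scaleR)
    show "norm (F x) \<le> norm x * (\<bar>k\<bar> * K)" for x
    proof -
      have "norm (F x) \<le> \<bar>k\<bar> * norm (H x)"
        using below[OF FW[of x]] GF[of x] by (smt (verit) abs_ge_self mult_right_mono norm_ge_zero)
      also have "\<dots> \<le> \<bar>k\<bar> * (norm x * K)" using K[of x] by (simp add: mult_left_mono)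
      finally show ?thesis by (simp add: ac_simps)
    qed
  qed
  moreover have "F (cscale c x) = cscale c (F x)" for c x
    by (rule unique) (auto simp: FW W(2) GF bop_cscale[OF G] bop_cscale[OF H])
  ultimately show ?thesis using that FW GF bopI by blast
qed

text \<open>Riesz decomposition: for p beyond both the ascent and the descent, (1 - C)^p and 1 - C map
W = range (1 - C)^p injectively onto itself and are bounded below there. Projecting onto W along
the finite-dimensional kernel of (1 - C)^p and inverting 1 - C on W gives B.\<close>

lemma id_minus_compact_inverse_modulo_finite_rank:
  fixes C :: "'a::complex_banach \<Rightarrow> 'a"
  assumes C: "seq_compact_op C" "bop C"
  obtains B Q E where "bop B" "bop Q" "finite E" "\<And>x. Q x \<in> span E"
    "\<And>x. B x - C (B x) = x - Q x"
proof -
  define L where "L = (\<lambda>x. x - C x)"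
  obtain p where ascent: "\<And>j x. (L ^^ (p + j)) x = 0 \<Longrightarrow> (L ^^ p) x = 0"
    and descent: "\<And>j. range (L ^^ p) \<subseteq> range (L ^^ (p + j))"
    using id_minus_compact_riesz_index[OF C(1), folded L_def] by blast
  obtain D where D_compact: "\<And>n. seq_compact_op (D n)" and D: "\<And>n. L ^^ n = (\<lambda>x. x - D n x)"
    using id_minus_seq_compact_op_funpow[OF C(1), folded L_def] by blast
  have L: "bop L" unfolding L_def by (rule bop_diff[OF bop_ident C(2)])
  have Lp: "bop (L ^^ p)" by (rule bop_funpow[OF L])
  have L_Suc: "(L ^^ Suc n) x = (L ^^ n) (L x)" for n x by (simp only: funpow_Suc_right comp_apply)
  define W where "W = range (L ^^ p)"
  have W_subspace: "subspace W"
    unfolding W_def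
    using linear_subspace_image[OF bounded_linear.linear[OF bop_bounded_linear[OF Lp]] subspace_UNIV]
    by simp
  have W_cscale: "cscale c w \<in> W" if "w \<in> W" for c w
    using that bop_cscale[OF Lp, symmetric] unfolding W_def by blast
  have W_closed: "closed W"
    unfolding W_def D by (rule id_minus_compact_closed_range[OF D_compact])
  have Lp_injective: "w = 0" if w: "w \<in> W" and zero: "(L ^^ p) w = 0" for w
  proof -
    obtain z where "w = (L ^^ p) z" using w unfolding W_def by blast
    then show ?thesis using zero ascent[of p z] by (simp add: funpow_add)
  qed
  have L_injective: "w = 0" if "w \<in> W" "L w = 0" for w
    using that Lp_injective ascent[of 1 w] L_Suc[of p w] linear_0[OF bounded_linear.linear[OF bop_bounded_linear[OF Lp]]]
    by simp
  have "w = 0" if "w \<in> W" "D p w = w" for w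
    using Lp_injective[OF that(1)] that(2) D[of p] by simp
  then obtain k1 where "\<And>w. w \<in> W \<Longrightarrow> norm w \<le> k1 * norm (w - D p w)"
    using id_minus_compact_bounded_below[OF D_compact W_closed W_subspace] by blast
  then have k1: "\<And>w. w \<in> W \<Longrightarrow> norm w \<le> k1 * norm ((L ^^ p) w)"
    by (simp add: D)
  have "w = 0" if "w \<in> W" "C w = w" for w
    using L_injective[OF that(1)] that(2) by (simp add: L_def)
  then obtain k2 where "\<And>w. w \<in> W \<Longrightarrow> norm w \<le> k2 * norm (w - C w)"
    using id_minus_compact_bounded_below[OF C(1) W_closed W_subspace] by blast
  then have k2: "\<And>w. w \<in> W \<Longrightarrow> norm w \<le> k2 * norm (L w)"
    by (simp add: L_def)
  have "(L ^^ p) x \<in> (L ^^ p) ` W" for x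
    using descent[of p] unfolding W_def by (auto simp: funpow_add image_comp)
  then obtain P :: "'a \<Rightarrow> 'a" where P: "bop P" "\<And>x. P x \<in> W" "\<And>x. (L ^^ p) (P x) = (L ^^ p) x"
    using bop_lift[OF W_subspace W_cscale Lp Lp k1] by metis
  have "range (L ^^ p) \<subseteq> L ` W"
    using descent[of 1] unfolding W_def by (simp add: image_comp)
  then have P_range: "P x \<in> L ` W" for x
    using P(2)[of x] unfolding W_def by blast
  obtain B :: "'a \<Rightarrow> 'a" where B: "bop B" "\<And>x. L (B x) = P x"
    using bop_lift[OF W_subspace W_cscale L P(1) k2 P_range] by metis
  obtain E where E: "finite E" "span E = {x. D p x = x}"
    using seq_compact_op_fixed_space_finite_dim[OF D_compact] by blast
  have "(L ^^ p) (x - P x) = 0" for x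
    using P(3) linear_diff[OF bounded_linear.linear[OF bop_bounded_linear[OF Lp]]] by simp
  then have "x - P x \<in> span E" for x using E(2) D[of p] by simp
  moreover have "B x - C (B x) = x - (x - P x)" for x using B(2) by (simp add: L_def)
  ultimately show ?thesis
    using that[OF B(1) bop_diff[OF bop_ident P(1)] E(1)] by blast
qed

section \<open>Equivalence after extension\<close>

text \<open>Evaluate T \<oplus> 1 = E (S \<oplus> 1) F at (x, 0) and split E (S y, y') = E (S y, 0) + E (0, y').
The first part factors through S. For the second, E (0, y') = (T (fst (F' (0, y'))), _), and
y' = snd (F (x, 0)) = snd (E' (T x, 0)) depends on x only through T x (E', F' the inverses of
E, F).\<close>

lemma equiv_after_ext_via_factorization:
  fixes T :: "'x::complex_banach \<Rightarrow> 'x" and S :: "'y::complex_banach \<Rightarrow> 'y"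
    and E :: "'y \<times> 'y2::complex_banach \<Rightarrow> 'x \<times> 'x2::complex_banach"
    and F :: "'x \<times> 'x2 \<Rightarrow> 'y \<times> 'y2"
  assumes S: "bop S" and eq: "equiv_after_ext_via T S E F"
  obtains A K where "A \<in> op_ideal S" "bop K" "\<And>x. T x = A x + T (K (T x))"
proof -
  obtain E' where E: "bop E" "bop E'" "\<And>p. E' (E p) = p"
    using eq unfolding equiv_after_ext_via_def by (auto elim: invertible_opE)
  obtain F' where F: "bop F" "bop F'" "\<And>p. F (F' p) = p"
    using eq unfolding equiv_after_ext_via_def by (auto elim: invertible_opE)
  have TE: "(T x, x') = E (S (fst (F (x, x'))), snd (F (x, x')))" for x x'
    using fun_cong[OF eq[unfolded equiv_after_ext_via_def, THEN conjunct2, THEN conjunct2], of "(x, x')"]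
    by (simp add: case_prod_beta)
  have E_S: "E (S y, y') = (T (fst (F' (y, y'))), snd (F' (y, y')))" for y y'
    using TE[of "fst (F' (y, y'))" "snd (F' (y, y'))"] by (simp add: F(3))
  have F_snd: "snd (F (x, 0)) = snd (E' (T x, 0))" for x
    using arg_cong[OF TE[of x 0], of E'] by (simp add: E(3))
  interpret E: bounded_linear E using E(1) bop_bounded_linear by blast
  interpret S: bounded_linear S using S bop_bounded_linear by blast
  define A where "A x = fst (E (S (fst (F (x, 0))), 0))" for x
  define K where "K u = fst (F' (0, snd (E' (u, 0))))" for u
  have "A \<in> op_ideal S"
    unfolding A_def[abs_def]
    by (intro op_ideal_sandwich bop_compose[OF bop_fst] bop_compose[OF E(1)] bop_Pair_left
        bop_compose[OF F(1)])
  moreover have "bop K"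
    unfolding K_def[abs_def]
    by (intro bop_compose[OF bop_fst] bop_compose[OF F(2)] bop_compose[OF bop_Pair_right]
        bop_compose[OF bop_snd] bop_compose[OF E(2)] bop_Pair_left)
  moreover have "T x = A x + T (K (T x))" for x
  proof -
    have "T x = fst (E (S (fst (F (x, 0))), snd (F (x, 0))))" using TE[of x 0] by (metis fst_conv)
    also have "\<dots> = A x + fst (E (S 0, snd (F (x, 0))))"
      using E.add[of "(S (fst (F (x, 0))), 0)" "(0, snd (F (x, 0)))"] by (simp add: A_def S.zero)
    also have "fst (E (S 0, snd (F (x, 0)))) = T (K (T x))"
      using E_S[of 0] by (simp add: S.zero F_snd K_def)
    finally show ?thesis .
  qed
  ultimately show ?thesis using that by blast
qed

lemma equiv_after_ext_via_sym:
  fixes T :: "'x::complex_banach \<Rightarrow> 'x" and S :: "'y::complex_banach \<Rightarrow> 'y"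
    and E :: "'y \<times> 'y2::complex_banach \<Rightarrow> 'x \<times> 'x2::complex_banach"
    and F :: "'x \<times> 'x2 \<Rightarrow> 'y \<times> 'y2"
  assumes "equiv_after_ext_via T S E F"
  obtains E' :: "'x \<times> 'x2 \<Rightarrow> 'y \<times> 'y2" and F' :: "'y \<times> 'y2 \<Rightarrow> 'x \<times> 'x2"
  where "equiv_after_ext_via S T E' F'"
proof -
  obtain E' where E: "bop E" "bop E'" "\<And>p. E' (E p) = p" "\<And>p. E (E' p) = p"
    using assms unfolding equiv_after_ext_via_def by (auto elim: invertible_opE)
  obtain F' where F: "bop F" "bop F'" "\<And>p. F' (F p) = p" "\<And>p. F (F' p) = p"
    using assms unfolding equiv_after_ext_via_def by (auto elim: invertible_opE)
  have "(\<lambda>(y, y'). (S y, y')) = E' \<circ> (\<lambda>(x, x'). (T x, x')) \<circ> F'"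
    using assms unfolding equiv_after_ext_via_def by (auto simp: E(3) F(4))
  moreover have "invertible_op E'"
    unfolding invertible_op_def using E by (auto simp: fun_eq_iff intro!: exI[of _ E])
  moreover have "invertible_op F'"
    unfolding invertible_op_def using F by (auto simp: fun_eq_iff intro!: exI[of _ F])
  ultimately show ?thesis
    using that[of E' F'] unfolding equiv_after_ext_via_def by blast
qed

lemma compact_in_op_ideal_of_equiv_after_ext:
  fixes T :: "'x::complex_banach \<Rightarrow> 'x" and S :: "'y::complex_banach \<Rightarrow> 'y"
    and E :: "'y \<times> 'y2::complex_banach \<Rightarrow> 'x \<times> 'x2::complex_banach"
    and F :: "'x \<times> 'x2 \<Rightarrow> 'y \<times> 'y2"
  assumes T: "compact_op T" and S: "bop S" "S \<noteq> (\<lambda>y. 0)"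
    and eq: "equiv_after_ext_via T S E F"
  shows "T \<in> op_ideal S"
proof -
  have T_bop: "bop T" using T unfolding compact_op_def by blast
  obtain A K where A: "A \<in> op_ideal S" and K: "bop K" and TAK: "\<And>x. T x = A x + T (K (T x))"
    using equiv_after_ext_via_factorization[OF S(1) eq] by blast
  have "seq_compact_op (\<lambda>x. K (T x))"
    by (rule seq_compact_op_compose_left[OF compact_op_imp_seq_compact_op[OF T] bop_bounded_linear[OF K]])
  then obtain B Q E where B: "bop B" and Q: "bop Q" "finite E" "\<And>x. Q x \<in> span E"
    and BQ: "\<And>x. B x - K (T (B x)) = x - Q x"
    using id_minus_compact_inverse_modulo_finite_rank bop_compose[OF K T_bop] by metis
  interpret T: bounded_linear T using T_bop bop_bounded_linear by blast
  have "T = (\<lambda>x. A (B x) + T (Q x))"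
  proof
    fix x
    have "T x = T (B x - K (T (B x))) + T (Q x)" by (simp add: BQ T.diff)
    also have "T (B x - K (T (B x))) = A (B x)"
      using TAK[of "B x"] by (simp add: T.diff diff_eq_eq)
    finally show "T x = A (B x) + T (Q x)" .
  qed
  moreover have "(\<lambda>x. A (B x)) \<in> op_ideal S"
    using op_ideal_compose[OF A bop_ident B] by simp
  moreover have "T (Q x) \<in> span (T ` E)" for x
    using Q(3)[of x] linear_span_image[OF T.linear] by blast
  then have "(\<lambda>x. T (Q x)) \<in> op_ideal S"
    by (rule finite_rank_in_op_ideal[OF S bop_compose[OF T_bop Q(1)] finite_imageI[OF Q(2)]])
  ultimately show ?thesis using op_ideal_add by metis
qed

theorem theorem2p5:
  fixes T :: "'x::complex_banach \<Rightarrow> 'x"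
    and S :: "'y::complex_banach \<Rightarrow> 'y"
    and E :: "'y \<times> 'y2::complex_banach \<Rightarrow> 'x \<times> 'x2::complex_banach"
    and F :: "'x \<times> 'x2 \<Rightarrow> 'y \<times> 'y2"
  assumes "compact_op T" and "T \<noteq> (\<lambda>x. 0)"
    and "compact_op S" and "S \<noteq> (\<lambda>y. 0)"
    and "equiv_after_ext_via T S E F"
  shows "(op_ideal T :: ('z1::complex_banach \<Rightarrow> 'z2::complex_banach) set) = op_ideal S"
proof -
  have "bop T" "bop S" using assms(1,3) unfolding compact_op_def by auto
  obtain E' :: "'x \<times> 'x2 \<Rightarrow> 'y \<times> 'y2" and F' :: "'y \<times> 'y2 \<Rightarrow> 'x \<times> 'x2"
    where "equiv_after_ext_via S T E' F'"
    using equiv_after_ext_via_sym[OF assms(5)] by blast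
  then have "S \<in> op_ideal T"
    using compact_in_op_ideal_of_equiv_after_ext[OF assms(3) \<open>bop T\<close> assms(2)] by blast
  moreover have "T \<in> op_ideal S"
    using compact_in_op_ideal_of_equiv_after_ext[OF assms(1) \<open>bop S\<close> assms(4,5)] .
  ultimately show ?thesis by (intro equalityI op_ideal_subset)
qed

end
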